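(* Let $\vec G$ be a finite directed multigraph without self-loops with $n$ vertices and $m$ edges, with positive real edge Values and edges listed in chronological order. If Maxflow paths are computed by the max-priority-queue (binary max-heap) widest-path procedure and cycle detection is done by depth-first search, then the Weighted Cycle Deletion procedure (described in the context) runs in time $O\big((m+n)\cdot m^2\cdot \log n\big)$.
   Context: A Maxflow path from $x$ to $y$ in a graph $H$ is a directed path from $x$ to $y$ whose minimum edge Value is maximum among all directed paths from $x$ to $y$ in $H$. It is computed as follows: initialize $\mathrm{dist}[x]=+\infty$, $\mathrm{dist}[w]=-\infty$ otherwise; repeatedly extract from a max-heap a vertex $\mathrm{ver}$ of largest $\mathrm{dist}$, and for each out-neighbor $w$ set $\mathrm{dist}[w]=\max(\mathrm{dist}[w],\min(\mathrm{dist}[\mathrm{ver}],\text{largest Value of an edge from }\mathrm{ver}\text{ to }w))$, recording the corresponding parent edge when $\mathrm{dist}[w]$ increases; then recover the path from parent pointers. The flow value $\phi(C)$ of a directed cycle $C$ is the maximum minus the minimum edge Value on $C$. DELETE\_CYCLE$(G',e)$, with $e$ directed from $u$ to $v$: set $S=\emptyset$, $H=G'$; while $H$ contains a directed path from $v$ to $u$, compute a Maxflow path $P$ from $v$ to $u$ in $H$, add $P$ to $S$, and delete from $H$ every edge whose Value is at least the maximum edge Value of $P$. Then choose $P_{\min}\in S$ minimizing $\phi(P\cup\{e\})$, let $C=P_{\min}\cup\{e\}$ and $c$ the minimum edge Value on $C$; subtract $c$ from every edge Value of $C$ in $G'$, remove edges whose Value becomes $0$, and return $G'$. Weighted Cycle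 Deletion: start with empty $G'$; for $i=1,\dots,m$: insert $e_i$ into $G'$; while $G'$ contains a directed cycle, replace $G'$ by DELETE\_CYCLE$(G',e_i)$. Output $G'$. *)

theory Defs
  imports Complex_Main "HOL-Library.Extended_Real" "HOL-Library.While_Combinator" "HOL-Library.Monad_Syntax"
begin

text \<open>Cost model (unit-cost RAM): every elementary step (comparison, assignment,
real arithmetic, list/adjacency-list access) costs 1; every operation of the
binary max-heap (which never holds more than n vertices) costs hc n = ceil(log2(n+1)) + 1.
Values are reals. An edge is (identifier, tail, head, Value); vertices are 0..n-1.\<close>

type_synonym edge = "nat \<times> nat \<times> nat \<times> real"

definition eid :: "edge \<Rightarrow> nat" where "eid e = fst e"
definition etl :: "edge \<Rightarrow> nat" where "etl e = fst (snd e)"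
definition ehd :: "edge \<Rightarrow> nat" where "ehd e = fst (snd (snd e))"
definition evl :: "edge \<Rightarrow> real" where "evl e = snd (snd (snd e))"

text \<open>While loop with a partial body: None = body failed or loop does not terminate.\<close>
definition whileP :: "('s \<Rightarrow> bool) \<Rightarrow> ('s \<Rightarrow> 's option) \<Rightarrow> 's \<Rightarrow> 's option" where
  "whileP b c s = Option.bind
     (while_option (\<lambda>x. case x of Some s \<Rightarrow> b s | None \<Rightarrow> False) (\<lambda>x. Option.bind x c) (Some s)) id"

definition hc :: "nat \<Rightarrow> nat" where "hc n = nat \<lceil>log 2 (real n + 1)\<rceil> + 1"

definition adj :: "edge list \<Rightarrow> nat \<Rightarrow> edge list" where
  "adj H v = filter (\<lambda>e. etl e = v) H"

definition relax1 :: "nat \<Rightarrow> nat \<Rightarrow> (nat \<Rightarrow> ereal) \<times> (nat \<Rightarrow> edge option) \<times> nat \<Rightarrow> edge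
    \<Rightarrow> (nat \<Rightarrow> ereal) \<times> (nat \<Rightarrow> edge option) \<times> nat" where
  "relax1 n v s e = (case s of (dst, par, t) \<Rightarrow>
     (let cand = min (dst v) (ereal (evl e)); w = ehd e in
      if dst w < cand then (dst(w := cand), par(w := Some e), t + 1 + hc n)
      else (dst, par, t + 1)))"

definition pick_max :: "(nat \<Rightarrow> ereal) \<Rightarrow> nat set \<Rightarrow> nat" where
  "pick_max dst Q = (SOME v. v \<in> Q \<and> (\<forall>w\<in>Q. dst w \<le> dst v))"

definition dij_step :: "nat \<Rightarrow> edge list \<Rightarrow> (nat \<Rightarrow> ereal) \<times> (nat \<Rightarrow> edge option) \<times> nat set \<times> nat
    \<Rightarrow> ((nat \<Rightarrow> ereal) \<times> (nat \<Rightarrow> edge option) \<times> nat set \<times> nat) option" where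
  "dij_step n H s = (case s of (dst, par, Q, t) \<Rightarrow>
     (let v = pick_max dst Q in
      (case foldl (relax1 n v) (dst, par, t + 1 + hc n) (adj H v) of
         (dst', par', t') \<Rightarrow> Some (dst', par', Q - {v}, t'))))"

text \<open>Returns (y reachable from x, Maxflow path as edge list from x to y, cost).\<close>
definition maxflow :: "nat \<Rightarrow> edge list \<Rightarrow> nat \<Rightarrow> nat \<Rightarrow> (bool \<times> edge list \<times> nat) option" where
  "maxflow n H x y = do {
     (dst, par, Q, t) \<leftarrow> whileP (\<lambda>(d, p, Q, t). Q \<noteq> {}) (dij_step n H)
        (\<lambda>w. if w = x then PInfty else MInfty, \<lambda>w. None, {0..<n}, 3 * n + length H + 1);
     (z, P, t') \<leftarrow> whileP (\<lambda>(z, P, t). z \<noteq> x \<and> par z \<noteq> None)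
        (\<lambda>(z, P, t). Some (etl (the (par z)), the (par z) # P, t + 1)) (y, [], t);
     Some (dst y \<noteq> MInfty, P, t' + 1) }"

definition del_cycle :: "nat \<Rightarrow> edge list \<Rightarrow> edge \<Rightarrow> (edge list \<times> nat) option" where
  "del_cycle n G e = do {
     (H, S, fin, t) \<leftarrow> whileP (\<lambda>(H, S, fin, t). \<not> fin)
        (\<lambda>(H, S, fin, t). do {
            (r, P, tm) \<leftarrow> maxflow n H (ehd e) (etl e);
            if r then
              (let mx = Max (evl ` set P) in
               Some (filter (\<lambda>f. evl f < mx) H, S @ [P], False, t + tm + length H + length P + 1))
            else Some (H, S, True, t + tm) })
        (G, [], False, length G + 1);
     if S = [] then None else
     (let phi = (\<lambda>P. Max (evl ` set (e # P)) - Min (evl ` set (e # P)));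
          Pm = (SOME P. P \<in> set S \<and> (\<forall>Q\<in>set S. phi P \<le> phi Q));
          C = e # Pm;
          c = Min (evl ` set C);
          ids = eid ` set C;
          G1 = map (\<lambda>f. if eid f \<in> ids then (eid f, etl f, ehd f, evl f - c) else f) G;
          G2 = filter (\<lambda>f. evl f \<noteq> 0) G1
      in Some (G2, t + sum_list (map (\<lambda>P. length P + 2) S) + 2 * length C + 3 * length G + 1)) }"

definition dfs_step :: "edge list \<Rightarrow> (nat \<Rightarrow> nat) \<times> (nat \<times> edge list) list \<times> nat list \<times> bool \<times> nat
    \<Rightarrow> (nat \<Rightarrow> nat) \<times> (nat \<times> edge list) list \<times> nat list \<times> bool \<times> nat" where
  "dfs_step G s = (case s of (col, st, rs, fd, t) \<Rightarrow>
     (case st of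
        [] \<Rightarrow> (case rs of
                 [] \<Rightarrow> (col, st, rs, fd, t + 1)
               | r # rs' \<Rightarrow> if col r = 0 then (col(r := 1), [(r, adj G r)], rs', fd, t + 1)
                            else (col, st, rs', fd, t + 1))
      | (v, es) # st' \<Rightarrow> (case es of
                 [] \<Rightarrow> (col(v := 2), st', rs, fd, t + 1)
               | e # es' \<Rightarrow> (let w = ehd e in
                   if col w = 1 then (col, (v, es') # st', rs, True, t + 1)
                   else if col w = 0 then (col(w := 1), (w, adj G w) # (v, es') # st', rs, fd, t + 1)
                   else (col, (v, es') # st', rs, fd, t + 1)))))"

text \<open>Returns (G contains a directed cycle, cost). Colours: 0 white, 1 grey, 2 black.\<close>
definition has_cycle :: "nat \<Rightarrow> edge list \<Rightarrow> (bool \<times> nat) option" where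
  "has_cycle n G = do {
     (col, st, rs, fd, t) \<leftarrow> whileP (\<lambda>(col, st, rs, fd, t). \<not> fd \<and> (st \<noteq> [] \<or> rs \<noteq> []))
        (\<lambda>s. Some (dfs_step G s)) (\<lambda>_. 0, [], [0..<n], False, length G + 2 * n + 1);
     Some (fd, t) }"

definition wcd_step :: "nat \<Rightarrow> (edge list \<times> nat) option \<Rightarrow> nat \<times> (nat \<times> nat \<times> real)
    \<Rightarrow> (edge list \<times> nat) option" where
  "wcd_step n Gt ie = (case ie of (i, (a, b, x)) \<Rightarrow> do {
     (G, t) \<leftarrow> Gt;
     let G' = G @ [(i, a, b, x)];
     (c0, t0) \<leftarrow> has_cycle n G';
     (G'', t'', cyc) \<leftarrow> whileP (\<lambda>(G, t, cyc). cyc)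
        (\<lambda>(G, t, cyc). do {
            e \<leftarrow> find (\<lambda>f. eid f = i) G;
            (G1, t1) \<leftarrow> del_cycle n G e;
            (cyc', t2) \<leftarrow> has_cycle n G1;
            Some (G1, t + length G + t1 + t2, cyc') })
        (G', t + 1 + t0, c0);
     Some (G'', t'') })"

text \<open>Input: edges listed chronologically as (tail, head, Value); edge number i gets
identifier i. Output: (final G', total cost), or None if the procedure does not terminate.\<close>
definition wcd :: "nat \<Rightarrow> (nat \<times> nat \<times> real) list \<Rightarrow> (edge list \<times> nat) option" where
  "wcd n es = foldl (wcd_step n) (Some ([], 1)) (zip [0..<length es] es)"

definition valid_input :: "nat \<Rightarrow> (nat \<times> nat \<times> real) list \<Rightarrow> bool" where
  "valid_input n es = (\<forall>(a, b, x) \<in> set es. a < n \<and> b < n \<and> a \<noteq> b \<and> 0 < x)"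

end

theory Submission
  imports Defs
begin

text \<open>Each subroutine is analysed with a loop invariant and a potential function whose
decrease pays for every elementary step: depth-first search costs O(m + n), one Maxflow
computation O((m + n) log n), and one call of DELETE\_CYCLE makes at most m Maxflow
computations, since each path found loses its edge of largest Value from H. Before the
insertion of an edge e the graph is acyclic, so every cycle afterwards passes through e and
the search for a path from the head to the tail of e succeeds. Each call of DELETE\_CYCLE
zeroes, and thus removes, at least one edge; as only m edges are ever inserted, there are at
most m calls in total, each costing O(m (m + n) log n) including the cycle test after it.\<close>

lemma whileP_rule:
  fixes f :: "'s \<Rightarrow> nat"
  assumes init: "I s0"
    and step: "\<And>s. I s \<Longrightarrow> b s \<Longrightarrow> \<exists>s'. c s = Some s' \<and> I s' \<and> f s' < f s"
  shows "\<exists>s'. whileP b c s0 = Some s' \<and> I s' \<and> \<not> b s'"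
proof -
  define B where "B = (\<lambda>x. case x of Some s \<Rightarrow> b s | None \<Rightarrow> False)"
  define C where "C = (\<lambda>x. Option.bind x c)"
  define P where "P = (\<lambda>x. \<exists>s. x = Some s \<and> I s)"
  define g where "g = (\<lambda>x. case x of Some s \<Rightarrow> f s | None \<Rightarrow> 0)"
  have st: "P (C x) \<and> g (C x) < g x" if "P x" "B x" for x
  proof -
    from that obtain s where s: "x = Some s" "I s" "b s" by (auto simp: P_def B_def)
    from step[OF s(2,3)] obtain s' where "c s = Some s'" "I s'" "f s' < f s" by blast
    then show ?thesis using s by (auto simp: P_def C_def g_def)
  qed
  have "P (Some s0)" using init by (simp add: P_def)
  then obtain t where t: "while_option B C (Some s0) = Some t"
    using measure_while_option_Some[of P B C g] st by blast
  have "P t" using while_option_rule[of P B C, OF _ t] st \<open>P (Some s0)\<close> by blast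
  moreover have "\<not> B t" using while_option_stop[OF t] .
  ultimately obtain s' where "t = Some s'" "I s'" "\<not> b s'" by (auto simp: P_def B_def)
  moreover have "whileP b c s0 = Option.bind (Some t) id"
    using t by (simp add: whileP_def B_def C_def)
  ultimately show ?thesis by simp
qed

definition edge_rel :: "edge list \<Rightarrow> (nat \<times> nat) set" where
  "edge_rel G = (\<lambda>e. (etl e, ehd e)) ` set G"

abbreviation edges_below :: "nat \<Rightarrow> edge list \<Rightarrow> bool" where
  "edges_below n G \<equiv> \<forall>e\<in>set G. etl e < n \<and> ehd e < n"

lemma edge_relI: "e \<in> set G \<Longrightarrow> (etl e, ehd e) \<in> edge_rel G"
  by (auto simp: edge_rel_def)

lemma set_adj: "e \<in> set (adj G v) \<longleftrightarrow> e \<in> set G \<and> etl e = v"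
  by (auto simp: adj_def)

lemma sum_length_adj: "\<forall>e\<in>set G. etl e < n \<Longrightarrow> (\<Sum>u<n. length (adj G u)) = length G"
proof (induction G)
  case Nil then show ?case by (simp add: adj_def)
next
  case (Cons e G)
  have "(\<Sum>u<n. length (adj (e # G) u)) = (\<Sum>u<n. (if etl e = u then 1 else 0) + length (adj G u))"
    by (rule sum.cong) (auto simp: adj_def)
  also have "\<dots> = (\<Sum>u<n. (if etl e = u then 1 else 0)) + (\<Sum>u<n. length (adj G u))"
    by (simp add: sum.distrib)
  also have "(\<Sum>u<n. (if etl e = u then 1 else 0::nat)) = 1"
    using Cons.prems by (simp add: sum.delta)
  finally show ?case using Cons by simp
qed

lemma acyclic_if_rank_decreasing:
  assumes "\<And>a b. (a, b) \<in> r \<Longrightarrow> (f b :: nat) < f a"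
  shows "acyclic r"
proof -
  have "(x, y) \<in> r\<^sup>+ \<Longrightarrow> f y < f x" for x y
    by (induction rule: trancl_induct) (auto dest: assms)
  then show ?thesis by (auto simp: acyclic_def)
qed

section \<open>Cycle detection by depth-first search\<close>

fun rev_walk :: "(nat \<times> nat) set \<Rightarrow> nat list \<Rightarrow> bool" where
  "rev_walk R [] = True"
| "rev_walk R [x] = True"
| "rev_walk R (x # y # r) = ((y, x) \<in> R \<and> rev_walk R (y # r))"

lemma rev_walk_reach: "rev_walk R (x # l) \<Longrightarrow> w \<in> set (x # l) \<Longrightarrow> (w, x) \<in> R\<^sup>*"
proof (induction l arbitrary: x)
  case Nil then show ?case by simp
next
  case (Cons y l)
  then have "(y, x) \<in> R" "rev_walk R (y # l)" by auto
  show ?case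
  proof (cases "w = x")
    case True then show ?thesis by simp
  next
    case False
    then have "w \<in> set (y # l)" using Cons.prems by simp
    then have "(w, y) \<in> R\<^sup>*" using Cons.IH \<open>rev_walk R (y # l)\<close> by blast
    then show ?thesis using \<open>(y, x) \<in> R\<close> by (meson rtrancl.rtrancl_into_rtrancl)
  qed
qed

definition white_vertices :: "nat \<Rightarrow> (nat \<Rightarrow> nat) \<Rightarrow> nat set" where
  "white_vertices n col = {u. u < n \<and> col u = 0}"

text \<open>A white vertex still pays for being coloured grey and black and for scanning its
adjacency list; a stack frame pays for its unscanned edges and for being popped.\<close>
definition dfs_potential :: "edge list \<Rightarrow> nat \<Rightarrow> (nat \<Rightarrow> nat) \<Rightarrow> (nat \<times> edge list) list \<Rightarrow> nat list \<Rightarrow> nat" where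
  "dfs_potential G n col st rs = 2 * card (white_vertices n col) + (\<Sum>u\<in>white_vertices n col. length (adj G u))
     + sum_list (map (\<lambda>(v, es). length es + 1) st) + length rs"

abbreviation black :: "(nat \<Rightarrow> nat) \<Rightarrow> nat \<Rightarrow> bool" where
  "black col u \<equiv> col u \<noteq> 0 \<and> col u \<noteq> 1"

text \<open>Black vertices are closed under successors and carry a rank decreasing along edges, so
they span no cycle; every edge already scanned from a stack frame leads to a black vertex
or to a frame above it.\<close>
definition dfs_scan_inv :: "edge list \<Rightarrow> (nat \<Rightarrow> nat) \<Rightarrow> (nat \<times> edge list) list \<Rightarrow> bool" where
  "dfs_scan_inv G col st = (\<exists>(rk::nat\<Rightarrow>nat) (k::nat). (\<forall>u. black col u \<longrightarrow> rk u < k) \<and>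
     (\<forall>u. black col u \<longrightarrow> (\<forall>e\<in>set G. etl e = u \<longrightarrow> black col (ehd e) \<and> rk (ehd e) < rk u)) \<and>
     (\<forall>ab v es below. st = ab @ (v, es) # below \<longrightarrow>
        (\<exists>ds. adj G v = ds @ es \<and> (\<forall>e\<in>set ds. black col (ehd e) \<or> ehd e \<in> fst ` set ab))))"

definition dfs_inv :: "edge list \<Rightarrow> nat \<Rightarrow> nat \<Rightarrow> (nat \<Rightarrow> nat) \<times> (nat \<times> edge list) list \<times> nat list \<times> bool \<times> nat \<Rightarrow> bool" where
  "dfs_inv G n T0 s = (case s of (col, st, rs, fd, t) \<Rightarrow>
     set rs \<subseteq> {..<n} \<and> (\<forall>u. col u = 1 \<longleftrightarrow> u \<in> fst ` set st) \<and> distinct (map fst st) \<and>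
     (\<forall>(v, es)\<in>set st. v < n \<and> (\<exists>ds. adj G v = ds @ es)) \<and> rev_walk (edge_rel G) (map fst st) \<and>
     (fd \<longrightarrow> \<not> acyclic (edge_rel G)) \<and> (\<not> fd \<longrightarrow> dfs_scan_inv G col st) \<and>
     (\<forall>u<n. u \<in> set rs \<or> col u \<noteq> 0) \<and> t + dfs_potential G n col st rs \<le> T0)"

lemma dfs_potential_grey:
  assumes "r < n" "col r = 0"
  shows "2 * card (white_vertices n col) + (\<Sum>u\<in>white_vertices n col. length (adj G u)) =
    2 + length (adj G r) + 2 * card (white_vertices n (col(r := 1)))
      + (\<Sum>u\<in>white_vertices n (col(r := 1)). length (adj G u))"
proof -
  have fin: "finite (white_vertices n col)" and r: "r \<in> white_vertices n col"
    and upd: "white_vertices n (col(r := 1)) = white_vertices n col - {r}"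
    using assms by (auto simp: white_vertices_def)
  have "card (white_vertices n col) = Suc (card (white_vertices n col - {r}))"
    using card_Suc_Diff1[OF fin r] by simp
  moreover have "(\<Sum>u\<in>white_vertices n col. length (adj G u)) =
      length (adj G r) + (\<Sum>u\<in>white_vertices n col - {r}. length (adj G u))"
    using sum.remove[OF fin r] .
  ultimately show ?thesis using upd by simp
qed

lemma dfs_scan_inv_root:
  assumes "dfs_scan_inv G col []" "col r = 0"
  shows "dfs_scan_inv G (col(r := 1)) [(r, adj G r)]"
proof -
  from assms(1) obtain rk and k :: nat where
    a: "\<forall>u. black col u \<longrightarrow> rk u < k"
       "\<forall>u. black col u \<longrightarrow> (\<forall>e\<in>set G. etl e = u \<longrightarrow> black col (ehd e) \<and> rk (ehd e) < rk u)"
    unfolding dfs_scan_inv_def by blast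
  have bl: "black (col(r := 1)) u = black col u" for u using assms(2) by auto
  show ?thesis unfolding dfs_scan_inv_def bl
    using a by (intro exI[of _ rk] exI[of _ k]) (auto simp: Cons_eq_append_conv)
qed

lemma dfs_scan_inv_skip:
  assumes "dfs_scan_inv G col ((v, e # es) # st)" "black col (ehd e)"
  shows "dfs_scan_inv G col ((v, es) # st)"
proof -
  from assms(1) obtain rk and k :: nat where
    a: "\<forall>u. black col u \<longrightarrow> rk u < k"
       "\<forall>u. black col u \<longrightarrow> (\<forall>e\<in>set G. etl e = u \<longrightarrow> black col (ehd e) \<and> rk (ehd e) < rk u)"
    and c: "\<forall>ab v' es' below. (v, e # es) # st = ab @ (v', es') # below \<longrightarrow>
        (\<exists>ds. adj G v' = ds @ es' \<and> (\<forall>e\<in>set ds. black col (ehd e) \<or> ehd e \<in> fst ` set ab))"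
    unfolding dfs_scan_inv_def by blast
  have "\<exists>ds. adj G v' = ds @ es' \<and> (\<forall>e\<in>set ds. black col (ehd e) \<or> ehd e \<in> fst ` set ab)"
    if h: "(v, es) # st = ab @ (v', es') # below" for ab v' es' below
  proof (cases ab)
    case Nil
    with h have "v' = v" "es' = es" "below = st" by auto
    with c[rule_format, of "[]" v "e # es" st] obtain ds where
      "adj G v = ds @ e # es" "\<forall>e\<in>set ds. black col (ehd e)" by auto
    then show ?thesis using assms(2) Nil \<open>v' = v\<close> \<open>es' = es\<close>
      by (intro exI[of _ "ds @ [e]"]) auto
  next
    case (Cons x ab')
    with h have x: "x = (v, es)" "st = ab' @ (v', es') # below" by auto
    with c[rule_format, of "(v, e # es) # ab'" v' es' below] obtain ds where
      "adj G v' = ds @ es'" "\<forall>e\<in>set ds. black col (ehd e) \<or> ehd e \<in> fst ` set ((v, e # es) # ab')" by auto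
    then show ?thesis using Cons x by (intro exI[of _ ds]) auto
  qed
  then show ?thesis unfolding dfs_scan_inv_def using a by blast
qed

lemma dfs_scan_inv_push:
  assumes "dfs_scan_inv G col ((v, e # es) # st)" "col (ehd e) = 0"
  shows "dfs_scan_inv G (col(ehd e := 1)) ((ehd e, adj G (ehd e)) # (v, es) # st)"
proof -
  let ?w = "ehd e"
  from assms(1) obtain rk and k :: nat where
    a: "\<forall>u. black col u \<longrightarrow> rk u < k"
       "\<forall>u. black col u \<longrightarrow> (\<forall>e\<in>set G. etl e = u \<longrightarrow> black col (ehd e) \<and> rk (ehd e) < rk u)"
    and c: "\<forall>ab v' es' below. (v, e # es) # st = ab @ (v', es') # below \<longrightarrow>
        (\<exists>ds. adj G v' = ds @ es' \<and> (\<forall>e\<in>set ds. black col (ehd e) \<or> ehd e \<in> fst ` set ab))"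
    unfolding dfs_scan_inv_def by blast
  have bl: "black (col(?w := 1)) u = black col u" for u using assms(2) by auto
  have "\<exists>ds. adj G v' = ds @ es' \<and> (\<forall>e\<in>set ds. black col (ehd e) \<or> ehd e \<in> fst ` set ab)"
    if h: "(?w, adj G ?w) # (v, es) # st = ab @ (v', es') # below" for ab v' es' below
  proof (cases ab)
    case Nil
    with h show ?thesis by (intro exI[of _ "[]"]) auto
  next
    case (Cons x ab')
    with h have x: "x = (?w, adj G ?w)" "(v, es) # st = ab' @ (v', es') # below" by auto
    show ?thesis
    proof (cases ab')
      case Nil
      with x have "v' = v" "es' = es" "below = st" by auto
      with c[rule_format, of "[]" v "e # es" st] obtain ds where
        "adj G v = ds @ e # es" "\<forall>e\<in>set ds. black col (ehd e)" by auto
      then show ?thesis using Nil Cons x \<open>v' = v\<close> \<open>es' = es\<close>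
        by (intro exI[of _ "ds @ [e]"]) auto
    next
      case (Cons y ab'')
      with x have y: "y = (v, es)" "st = ab'' @ (v', es') # below" by auto
      with c[rule_format, of "(v, e # es) # ab''" v' es' below] obtain ds where
        "adj G v' = ds @ es'" "\<forall>e\<in>set ds. black col (ehd e) \<or> ehd e \<in> fst ` set ((v, e # es) # ab'')" by auto
      then show ?thesis using Cons y \<open>ab = x # ab'\<close> by (intro exI[of _ ds]) auto
    qed
  qed
  then show ?thesis unfolding dfs_scan_inv_def bl using a by blast
qed

lemma dfs_scan_inv_pop:
  assumes "dfs_scan_inv G col ((v, []) # st)" "col v = 1"
  shows "dfs_scan_inv G (col(v := 2)) st"
proof -
  from assms(1) obtain rk and k :: nat where
    a: "\<forall>u. black col u \<longrightarrow> rk u < k"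
       "\<forall>u. black col u \<longrightarrow> (\<forall>e\<in>set G. etl e = u \<longrightarrow> black col (ehd e) \<and> rk (ehd e) < rk u)"
    and c: "\<forall>ab v' es' below. (v, []) # st = ab @ (v', es') # below \<longrightarrow>
        (\<exists>ds. adj G v' = ds @ es' \<and> (\<forall>e\<in>set ds. black col (ehd e) \<or> ehd e \<in> fst ` set ab))"
    unfolding dfs_scan_inv_def by blast
  have bl: "black (col(v := 2)) u = (black col u \<or> u = v)" for u using assms(2) by auto
  from c[rule_format, of "[]" v "[]" st] have vs: "\<forall>e\<in>set (adj G v). black col (ehd e)" by auto
  define rk' where "rk' = rk(v := k)"
  have rank_bound: "\<forall>u. black (col(v := 2)) u \<longrightarrow> rk' u < Suc k"
    using a(1) by (auto simp: bl rk'_def)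
  have rank_decreasing: "\<forall>u. black (col(v := 2)) u \<longrightarrow> (\<forall>e\<in>set G. etl e = u \<longrightarrow> black (col(v := 2)) (ehd e) \<and> rk' (ehd e) < rk' u)"
  proof (intro allI impI ballI)
    fix u e assume u: "black (col(v := 2)) u" and e: "e \<in> set G" "etl e = u"
    show "black (col(v := 2)) (ehd e) \<and> rk' (ehd e) < rk' u"
    proof (cases "u = v")
      case True
      then have "black col (ehd e)" using vs e by (auto simp: set_adj)
      then have "ehd e \<noteq> v" using assms(2) by auto
      then show ?thesis using \<open>black col (ehd e)\<close> a(1) True by (auto simp: bl rk'_def)
    next
      case False
      then have "black col u" using u bl by auto
      then have "black col (ehd e)" "rk (ehd e) < rk u" using a(2) e by auto
      then have "ehd e \<noteq> v" using assms(2) by auto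
      then show ?thesis using \<open>black col (ehd e)\<close> \<open>rk (ehd e) < rk u\<close> False by (auto simp: bl rk'_def)
    qed
  qed
  have frames: "\<exists>ds. adj G v' = ds @ es' \<and> (\<forall>e\<in>set ds. black (col(v := 2)) (ehd e) \<or> ehd e \<in> fst ` set ab)"
    if h: "st = ab @ (v', es') # below" for ab v' es' below
  proof -
    from c[rule_format, of "(v, []) # ab" v' es' below] h obtain ds where
      "adj G v' = ds @ es'" "\<forall>e\<in>set ds. black col (ehd e) \<or> ehd e \<in> fst ` set ((v, []) # ab)" by auto
    then show ?thesis by (intro exI[of _ ds]) (auto simp: bl)
  qed
  show ?thesis unfolding dfs_scan_inv_def using rank_bound rank_decreasing frames by blast
qed

lemma dfs_inv_visit_root:
  assumes I: "dfs_inv G n T0 (col, [], r # rs, False, t)" and white: "col r = 0"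
  shows "dfs_inv G n T0 (col(r := 1), [(r, adj G r)], rs, False, t + 1) \<and>
    dfs_potential G n (col(r := 1)) [(r, adj G r)] rs < dfs_potential G n col [] (r # rs)"
proof -
  from I have rs_n: "set (r # rs) \<subseteq> {..<n}" and gr: "\<forall>u. col u = 1 \<longleftrightarrow> u \<in> {}"
    and ci: "dfs_scan_inv G col []" and cov: "\<forall>u<n. u \<in> set (r # rs) \<or> col u \<noteq> 0"
    and cost: "t + dfs_potential G n col [] (r # rs) \<le> T0"
    by (auto simp: dfs_inv_def)
  have rn: "r < n" using rs_n by simp
  have ph: "dfs_potential G n (col(r := 1)) [(r, adj G r)] rs + 1 \<le> dfs_potential G n col [] (r # rs)"
    using dfs_potential_grey[of r n col G, OF rn white] by (simp add: dfs_potential_def)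
  have "dfs_inv G n T0 (col(r := 1), [(r, adj G r)], rs, False, t + 1)"
    unfolding dfs_inv_def using rs_n gr rn dfs_scan_inv_root[OF ci white] cov cost ph by auto
  with ph show ?thesis by simp
qed

lemma dfs_inv_skip_root:
  assumes I: "dfs_inv G n T0 (col, [], r # rs, False, t)" and "col r \<noteq> 0"
  shows "dfs_inv G n T0 (col, [], rs, False, t + 1) \<and>
    dfs_potential G n col [] rs < dfs_potential G n col [] (r # rs)"
  using assms by (auto simp: dfs_inv_def dfs_potential_def)

lemma dfs_inv_finish:
  assumes I: "dfs_inv G n T0 (col, (v, []) # st, rs, False, t)"
  shows "dfs_inv G n T0 (col(v := 2), st, rs, False, t + 1) \<and>
    dfs_potential G n (col(v := 2)) st rs < dfs_potential G n col ((v, []) # st) rs"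
proof -
  from I have gr: "\<forall>u. col u = 1 \<longleftrightarrow> u \<in> fst ` set ((v, []) # st)"
    and dist: "distinct (map fst ((v, []) # st))"
    and ch: "rev_walk (edge_rel G) (map fst ((v, []) # st))"
    and ci: "dfs_scan_inv G col ((v, []) # st)"
    and cost: "t + dfs_potential G n col ((v, []) # st) rs \<le> T0"
    by (auto simp: dfs_inv_def)
  have colv: "col v = 1" using gr by simp
  have "white_vertices n (col(v := 2)) = white_vertices n col"
    using colv by (auto simp: white_vertices_def)
  then have ph: "dfs_potential G n (col(v := 2)) st rs + 1 \<le> dfs_potential G n col ((v, []) # st) rs"
    by (simp add: dfs_potential_def)
  have ch': "rev_walk (edge_rel G) (map fst st)" using ch by (cases st) auto
  have "dfs_inv G n T0 (col(v := 2), st, rs, False, t + 1)"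
    using I unfolding dfs_inv_def
    using gr dist ch' dfs_scan_inv_pop[OF ci colv] cost ph by (auto split: if_splits)
  with ph show ?thesis by simp
qed

lemma dfs_inv_back_edge:
  assumes I: "dfs_inv G n T0 (col, (v, e # es) # st, rs, False, t)" and grey: "col (ehd e) = 1"
  shows "dfs_inv G n T0 (col, (v, es) # st, rs, True, t + 1) \<and>
    dfs_potential G n col ((v, es) # st) rs < dfs_potential G n col ((v, e # es) # st) rs"
proof -
  from I have gr: "\<forall>u. col u = 1 \<longleftrightarrow> u \<in> fst ` set ((v, e # es) # st)"
    and ch: "rev_walk (edge_rel G) (v # map fst st)"
    and sfx: "\<exists>ds. adj G v = ds @ e # es"
    by (auto simp: dfs_inv_def)
  obtain ds where ds: "adj G v = ds @ e # es" using sfx by blast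
  have "e \<in> set G" "etl e = v" using ds set_adj[of e G v] by auto
  then have "(v, ehd e) \<in> edge_rel G" using edge_relI by fastforce
  moreover have "(ehd e, v) \<in> (edge_rel G)\<^sup>*"
    using rev_walk_reach[OF ch] gr grey by auto
  ultimately have "(ehd e, ehd e) \<in> (edge_rel G)\<^sup>+" by (meson rtrancl_into_trancl1)
  then have "\<not> acyclic (edge_rel G)" by (auto simp: acyclic_def)
  then show ?thesis
    using I ds unfolding dfs_inv_def by (auto simp: dfs_potential_def intro!: exI[of _ "ds @ [e]"])
qed

lemma dfs_inv_tree_edge:
  assumes E: "edges_below n G"
    and I: "dfs_inv G n T0 (col, (v, e # es) # st, rs, False, t)" and white: "col (ehd e) = 0"
  defines "st' \<equiv> (ehd e, adj G (ehd e)) # (v, es) # st"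
  shows "dfs_inv G n T0 (col(ehd e := 1), st', rs, False, t + 1) \<and>
    dfs_potential G n (col(ehd e := 1)) st' rs < dfs_potential G n col ((v, e # es) # st) rs"
proof -
  let ?w = "ehd e"
  from I have rs_n: "set rs \<subseteq> {..<n}" and gr: "\<forall>u. col u = 1 \<longleftrightarrow> u \<in> fst ` set ((v, e # es) # st)"
    and dist: "distinct (map fst ((v, e # es) # st))"
    and sfx: "\<forall>(v, es)\<in>set ((v, e # es) # st). v < n \<and> (\<exists>ds. adj G v = ds @ es)"
    and ch: "rev_walk (edge_rel G) (v # map fst st)"
    and ci: "dfs_scan_inv G col ((v, e # es) # st)"
    and cov: "\<forall>u<n. u \<in> set rs \<or> col u \<noteq> 0"
    and cost: "t + dfs_potential G n col ((v, e # es) # st) rs \<le> T0"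
    by (auto simp: dfs_inv_def)
  obtain ds where ds: "adj G v = ds @ e # es" using sfx by auto
  have eG: "e \<in> set G" "etl e = v" using ds set_adj[of e G v] by auto
  have wn: "?w < n" using E eG by auto
  have ph: "dfs_potential G n (col(?w := 1)) st' rs + 1 \<le> dfs_potential G n col ((v, e # es) # st) rs"
    using dfs_potential_grey[of ?w n col G, OF wn white] by (simp add: dfs_potential_def st'_def)
  have wst: "?w \<notin> fst ` set ((v, e # es) # st)" using gr white by (metis zero_neq_one)
  have ch': "rev_walk (edge_rel G) (map fst st')"
    using ch edge_relI[OF eG(1)] eG(2) by (simp add: st'_def)
  have sfx': "\<forall>(v, es)\<in>set st'. v < n \<and> (\<exists>ds. adj G v = ds @ es)"
    using sfx wn ds unfolding st'_def by fastforce
  have "dfs_inv G n T0 (col(?w := 1), st', rs, False, t + 1)"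
    unfolding dfs_inv_def st'_def
    using rs_n gr dfs_scan_inv_push[OF ci white] wst dist sfx' ch' cov cost ph white
    by (auto simp: st'_def)
  with ph show ?thesis by simp
qed

lemma dfs_inv_cross_edge:
  assumes I: "dfs_inv G n T0 (col, (v, e # es) # st, rs, False, t)" and "black col (ehd e)"
  shows "dfs_inv G n T0 (col, (v, es) # st, rs, False, t + 1) \<and>
    dfs_potential G n col ((v, es) # st) rs < dfs_potential G n col ((v, e # es) # st) rs"
proof -
  from I obtain ds where ds: "adj G v = ds @ e # es" and ci: "dfs_scan_inv G col ((v, e # es) # st)"
    by (auto simp: dfs_inv_def)
  show ?thesis
    using I ds dfs_scan_inv_skip[OF ci assms(2)] unfolding dfs_inv_def
    by (auto simp: dfs_potential_def intro!: exI[of _ "ds @ [e]"])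
qed

lemma dfs_step_inv:
  assumes E: "edges_below n G"
    and I: "dfs_inv G n T0 (col, st, rs, False, t)" and running: "st \<noteq> [] \<or> rs \<noteq> []"
  shows "\<exists>col' st' rs' fd' t'. dfs_step G (col, st, rs, False, t) = (col', st', rs', fd', t') \<and>
     dfs_inv G n T0 (col', st', rs', fd', t') \<and> dfs_potential G n col' st' rs' < dfs_potential G n col st rs"
proof (cases st)
  case Nil
  then obtain r rs' where "rs = r # rs'" using running by (cases rs) auto
  then show ?thesis
    using Nil I dfs_inv_visit_root[of G n T0 col r rs' t] dfs_inv_skip_root[of G n T0 col r rs' t]
    by (cases "col r = 0") (auto simp: dfs_step_def)
next
  case (Cons top st')
  obtain v es where top: "top = (v, es)" by fastforce
  show ?thesis
  proof (cases es)
    case Nil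
    then show ?thesis
      using I Cons top dfs_inv_finish[of G n T0 col v st' rs t] by (auto simp: dfs_step_def)
  next
    case (Cons e es')
    then consider "col (ehd e) = 1" | "col (ehd e) = 0" | "black col (ehd e)" by blast
    then show ?thesis
      using I \<open>st = top # st'\<close> top Cons dfs_inv_back_edge[of G n T0 col v e es' st' rs t]
        dfs_inv_tree_edge[OF E, of T0 col v e es' st' rs t] dfs_inv_cross_edge[of G n T0 col v e es' st' rs t]
      by cases (auto simp: dfs_step_def Let_def)
  qed
qed

lemma has_cycle_correct:
  assumes E: "edges_below n G"
  shows "\<exists>b t. has_cycle n G = Some (b, t) \<and> t \<le> 2 * length G + 5 * n + 1 \<and> (b \<longleftrightarrow> \<not> acyclic (edge_rel G))"
proof -
  define T0 where "T0 = length G + 2 * n + 1 + dfs_potential G n (\<lambda>_. 0) [] [0..<n]"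
  have "white_vertices n (\<lambda>_. 0) = {..<n}" by (auto simp: white_vertices_def)
  then have potential_init: "dfs_potential G n (\<lambda>_. 0) [] [0..<n] = 3 * n + length G"
    using sum_length_adj[of G n] E by (simp add: dfs_potential_def)
  have "dfs_scan_inv G (\<lambda>_. 0) []"
    unfolding dfs_scan_inv_def by (rule exI[of _ "\<lambda>_. 0"], rule exI[of _ 0]) auto
  then have I0: "dfs_inv G n T0 (\<lambda>_. 0, [], [0..<n], False, length G + 2 * n + 1)"
    unfolding dfs_inv_def T0_def by auto
  have "\<exists>s'. whileP (\<lambda>(col, st, rs, fd, t). \<not> fd \<and> (st \<noteq> [] \<or> rs \<noteq> []))
        (\<lambda>s. Some (dfs_step G s)) (\<lambda>_. 0, [], [0..<n], False, length G + 2 * n + 1) = Some s' \<and>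
        dfs_inv G n T0 s' \<and> \<not> (\<lambda>(col, st, rs, fd, t). \<not> fd \<and> (st \<noteq> [] \<or> rs \<noteq> [])) s'"
    by (rule whileP_rule[where I = "dfs_inv G n T0" and
          f = "\<lambda>(col, st, rs, fd, t). dfs_potential G n col st rs", OF I0])
      (use dfs_step_inv[OF E] in \<open>fastforce split: prod.splits\<close>)
  then obtain col st rs fd t where
    w: "whileP (\<lambda>(col, st, rs, fd, t). \<not> fd \<and> (st \<noteq> [] \<or> rs \<noteq> []))
        (\<lambda>s. Some (dfs_step G s)) (\<lambda>_. 0, [], [0..<n], False, length G + 2 * n + 1) = Some (col, st, rs, fd, t)"
    and I: "dfs_inv G n T0 (col, st, rs, fd, t)" and stop: "fd \<or> (st = [] \<and> rs = [])"
    by auto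
  have "fd \<longleftrightarrow> \<not> acyclic (edge_rel G)"
  proof (cases fd)
    case True then show ?thesis using I by (simp add: dfs_inv_def)
  next
    case False
    with stop I have ci: "dfs_scan_inv G col []" and all_black: "\<forall>u<n. black col u"
      by (auto simp: dfs_inv_def)
    from ci obtain rk where
      rk: "\<forall>u. black col u \<longrightarrow> (\<forall>e\<in>set G. etl e = u \<longrightarrow> black col (ehd e) \<and> rk (ehd e) < (rk u :: nat))"
      unfolding dfs_scan_inv_def by blast
    have "rk b < rk a" if "(a, b) \<in> edge_rel G" for a b
      using that E all_black rk by (force simp: edge_rel_def)
    then have "acyclic (edge_rel G)" by (rule acyclic_if_rank_decreasing)
    then show ?thesis using False by simp
  qed
  moreover have "t \<le> 2 * length G + 5 * n + 1" using I potential_init by (simp add: dfs_inv_def T0_def)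
  ultimately show ?thesis using w by (auto simp: has_cycle_def)
qed

section \<open>Maxflow\<close>

text \<open>While the edges out of the extracted vertex v are scanned, every vertex keeps its label
and parent, or has been improved to a label at most that of v through a new parent edge from v.\<close>
definition relax_inv :: "nat set \<Rightarrow> edge list \<Rightarrow> nat \<Rightarrow> (nat \<Rightarrow> ereal) \<Rightarrow> (nat \<Rightarrow> edge option)
   \<Rightarrow> (nat \<Rightarrow> ereal) \<Rightarrow> (nat \<Rightarrow> edge option) \<Rightarrow> bool" where
  "relax_inv Q H v dst0 par0 d p = (d v = dst0 v \<and> (\<forall>u. u \<notin> Q \<longrightarrow> d u = dst0 u) \<and>
     (\<forall>z. (p z = par0 z \<and> d z = dst0 z) \<or> (\<exists>e. e \<in> set H \<and> etl e = v \<and> p z = Some e \<and> ehd e = z \<and>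
        z \<in> Q \<and> z \<noteq> v \<and> d z \<noteq> MInfty \<and> d z \<le> dst0 v \<and> dst0 z < d z)) \<and>
     (\<forall>w\<in>Q. d w \<le> dst0 v))"

lemma relax_inv_improve:
  assumes R: "relax_inv Q H v dst0 par0 d p" and e: "e \<in> set H" "etl e = v" "ehd e < n"
    and ext: "\<forall>u<n. u \<notin> Q \<longrightarrow> dst0 v \<le> dst0 u"
    and improves: "d (ehd e) < min (d v) (ereal (evl e))"
  shows "relax_inv Q H v dst0 par0 (d(ehd e := min (d v) (ereal (evl e)))) (p(ehd e := Some e))"
proof -
  let ?w = "ehd e"
  let ?c = "min (d v) (ereal (evl e))"
  from R have dv: "d v = dst0 v" and dext: "\<forall>u. u \<notin> Q \<longrightarrow> d u = dst0 u"
    and dz: "\<forall>z. (p z = par0 z \<and> d z = dst0 z) \<or> (\<exists>e. e \<in> set H \<and> etl e = v \<and> p z = Some e \<and> ehd e = z \<and>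
        z \<in> Q \<and> z \<noteq> v \<and> d z \<noteq> MInfty \<and> d z \<le> dst0 v \<and> dst0 z < d z)"
    and dq: "\<forall>w\<in>Q. d w \<le> dst0 v" unfolding relax_inv_def by blast+
  have cle: "?c \<le> dst0 v" using dv by simp
  have wQ: "?w \<in> Q"
  proof (rule ccontr)
    assume "?w \<notin> Q"
    then have "d ?w = dst0 ?w" "dst0 v \<le> dst0 ?w" using dext ext e(3) by auto
    then show False using improves cle dv by (simp add: min_def split: if_splits)
  qed
  have wv: "?w \<noteq> v" using improves dv by (metis min.cobounded1 not_le)
  have cM: "?c \<noteq> MInfty" using improves by (metis MInfty_eq_minfinity ereal_less_PInfty ereal_infty_less(2) not_MInfty_nonneg not_less_iff_gr_or_eq)
  have "dst0 ?w \<le> d ?w" using dz[rule_format, of ?w] by auto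
  then have lt: "dst0 ?w < ?c" using improves by (rule order.strict_trans1)
  have "((p(?w := Some e)) z = par0 z \<and> (d(?w := ?c)) z = dst0 z) \<or>
      (\<exists>e'. e' \<in> set H \<and> etl e' = v \<and> (p(?w := Some e)) z = Some e' \<and> ehd e' = z \<and> z \<in> Q \<and> z \<noteq> v \<and>
        (d(?w := ?c)) z \<noteq> MInfty \<and> (d(?w := ?c)) z \<le> dst0 v \<and> dst0 z < (d(?w := ?c)) z)" for z
  proof (cases "z = ?w")
    case True
    then show ?thesis using e wQ wv cM cle lt by (intro disjI2 exI[of _ e]) simp
  next
    case False
    then show ?thesis using dz[rule_format, of z] by simp
  qed
  then show ?thesis unfolding relax_inv_def using dv dext dq wv wQ cle by auto
qed

lemma relax1_inv:
  assumes E: "edges_below n H"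
    and ext: "\<forall>u<n. u \<notin> Q \<longrightarrow> dst0 v \<le> dst0 u"
    and R: "relax_inv Q H v dst0 par0 d p"
    and e: "e \<in> set H" "etl e = v"
  shows "\<exists>d' p' t'. relax1 n v (d, p, t) e = (d', p', t') \<and> relax_inv Q H v dst0 par0 d' p' \<and>
     t' \<le> t + (1 + hc n) \<and> (\<forall>z. d z \<le> d' z) \<and> (dst0 v \<noteq> MInfty \<longrightarrow> d' (ehd e) \<noteq> MInfty)"
proof (cases "d (ehd e) < min (d v) (ereal (evl e))")
  case True
  have "min (d v) (ereal (evl e)) \<noteq> MInfty" using True by (metis MInfty_eq_minfinity ereal_less_PInfty ereal_infty_less(2) not_MInfty_nonneg not_less_iff_gr_or_eq)
  moreover have "ehd e < n" using E e by auto
  ultimately show ?thesis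
    using relax_inv_improve[OF R e(1,2) _ ext True] True
    by (auto simp: relax1_def Let_def less_imp_le)
next
  case False
  have dv: "d v = dst0 v" using R by (simp add: relax_inv_def)
  have "relax1 n v (d, p, t) e = (d, p, t + 1)"
    unfolding relax1_def Let_def prod.case if_not_P[OF False] by simp
  moreover have "dst0 v \<noteq> MInfty \<longrightarrow> d (ehd e) \<noteq> MInfty"
    using False dv by (cases "dst0 v") auto
  ultimately show ?thesis using R by auto
qed

lemma foldl_relax1_inv:
  assumes E: "edges_below n H"
  and vQ: "v \<in> Q" and ext: "\<forall>u<n. u \<notin> Q \<longrightarrow> dst0 v \<le> dst0 u"
  shows "relax_inv Q H v dst0 par0 d p \<Longrightarrow> \<forall>e\<in>set L. e \<in> set H \<and> etl e = v \<Longrightarrow>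
     \<exists>d' p' t'. foldl (relax1 n v) (d, p, t) L = (d', p', t') \<and> relax_inv Q H v dst0 par0 d' p' \<and>
     t' \<le> t + (1 + hc n) * length L \<and> (\<forall>z. d z \<le> d' z) \<and>
     (\<forall>e\<in>set L. dst0 v \<noteq> MInfty \<longrightarrow> d' (ehd e) \<noteq> MInfty)"
proof (induction L arbitrary: d p t)
  case Nil then show ?case by simp
next
  case (Cons e L)
  obtain d1 p1 t1 where s1: "relax1 n v (d, p, t) e = (d1, p1, t1)" and R1: "relax_inv Q H v dst0 par0 d1 p1"
    and t1: "t1 \<le> t + (1 + hc n)" and m1: "\<forall>z. d z \<le> d1 z" and r1: "dst0 v \<noteq> MInfty \<longrightarrow> d1 (ehd e) \<noteq> MInfty"
    using relax1_inv[OF E ext Cons.prems(1), of e t] Cons.prems(2) by auto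
  obtain d' p' t' where s2: "foldl (relax1 n v) (d1, p1, t1) L = (d', p', t')"
    and R2: "relax_inv Q H v dst0 par0 d' p'" and t2: "t' \<le> t1 + (1 + hc n) * length L"
    and m2: "\<forall>z. d1 z \<le> d' z" and r2: "\<forall>e\<in>set L. dst0 v \<noteq> MInfty \<longrightarrow> d' (ehd e) \<noteq> MInfty"
  proof -
    have "\<forall>e\<in>set L. e \<in> set H \<and> etl e = v" using Cons.prems(2) by simp
    then show ?thesis using Cons.IH[OF R1, of t1] that by blast
  qed
  have "d' (ehd e) \<noteq> MInfty" if "dst0 v \<noteq> MInfty"
    using r1 that m2[rule_format, of "ehd e"] by auto
  moreover have "\<forall>z. d z \<le> d' z" using m1 m2 order_trans by blast
  ultimately show ?case using s1 s2 R2 t1 t2 r2 by auto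
qed

lemma pick_max_is_max:
  assumes "finite Q" "Q \<noteq> {}"
  shows "pick_max dst Q \<in> Q \<and> (\<forall>w\<in>Q. dst w \<le> dst (pick_max dst Q))"
proof -
  have "Max (dst ` Q) \<in> dst ` Q" using assms by (intro Max_in) auto
  then obtain v where "v \<in> Q" "dst v = Max (dst ` Q)" by auto
  then have "\<exists>v. v \<in> Q \<and> (\<forall>w\<in>Q. dst w \<le> dst v)" using assms by auto
  then show ?thesis unfolding pick_max_def by (rule someI_ex)
qed

text \<open>Every parent edge leaves a settled vertex, and along parent edges between settled
vertices the settling rank increases, so following parents from any vertex terminates.\<close>
definition parents_ranked :: "nat \<Rightarrow> edge list \<Rightarrow> nat set \<Rightarrow> (nat \<Rightarrow> edge option) \<Rightarrow> (nat \<Rightarrow> nat) \<Rightarrow> bool" where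
  "parents_ranked n H Q par rk = (\<forall>z e. par z = Some e \<longrightarrow>
     e \<in> set H \<and> ehd e = z \<and> etl e < n \<and> etl e \<notin> Q \<and> (z \<notin> Q \<longrightarrow> rk (etl e) < rk z))"

definition dij_inv :: "nat \<Rightarrow> edge list \<Rightarrow> nat \<Rightarrow> nat \<Rightarrow> (nat \<Rightarrow> ereal) \<times> (nat \<Rightarrow> edge option) \<times> nat set \<times> nat \<Rightarrow> bool" where
  "dij_inv n H x C0 s = (case s of (dst, par, Q, t) \<Rightarrow>
     Q \<subseteq> {..<n} \<and> (\<forall>u<n. u \<notin> Q \<longrightarrow> (\<forall>w\<in>Q. dst w \<le> dst u)) \<and>
     (\<exists>rk. (\<forall>u<n. u \<notin> Q \<longrightarrow> rk u < n - card Q) \<and> parents_ranked n H Q par rk) \<and>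
     dst x = PInfty \<and> (\<forall>z. z \<noteq> x \<longrightarrow> par z = None \<longrightarrow> dst z = MInfty) \<and>
     (\<forall>e\<in>set H. etl e \<notin> Q \<longrightarrow> dst (etl e) \<noteq> MInfty \<longrightarrow> dst (ehd e) \<noteq> MInfty) \<and>
     t + (1 + hc n) * (card Q + (\<Sum>u\<in>Q. length (adj H u))) \<le> C0)"

lemma parents_ranked_settle:
  assumes R: "relax_inv Q H v dst par d' p'" and v: "v \<in> Q" "v < n"
    and rk_settled: "\<forall>u<n. u \<notin> Q \<longrightarrow> rk u < n - card Q" and P: "parents_ranked n H Q par rk"
  shows "parents_ranked n H (Q - {v}) p' (rk(v := n - card Q))"
  unfolding parents_ranked_def
proof (intro allI impI)
  fix z e assume pz: "p' z = Some e"
  let ?rk = "rk(v := n - card Q)"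
  from R have "(p' z = par z \<and> d' z = dst z) \<or> (e \<in> set H \<and> etl e = v \<and> ehd e = z \<and> z \<in> Q \<and> z \<noteq> v)"
    using pz unfolding relax_inv_def by (metis option.inject)
  then show "e \<in> set H \<and> ehd e = z \<and> etl e < n \<and> etl e \<notin> Q - {v} \<and> (z \<notin> Q - {v} \<longrightarrow> ?rk (etl e) < ?rk z)"
  proof
    assume "p' z = par z \<and> d' z = dst z"
    then have "par z = Some e" using pz by simp
    then have "e \<in> set H" "ehd e = z" "etl e < n" "etl e \<notin> Q" "z \<notin> Q \<longrightarrow> rk (etl e) < rk z"
      using P unfolding parents_ranked_def by blast+
    moreover have "etl e \<noteq> v" using \<open>etl e \<notin> Q\<close> v by auto
    ultimately show ?thesis using rk_settled by auto
  qed (use v in auto)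
qed

lemma dij_labels_settle:
  assumes R: "relax_inv Q H v dst par d' p'" and vQ: "v \<in> Q"
    and ext: "\<forall>u<n. u \<notin> Q \<longrightarrow> dst v \<le> dst u"
    and dx: "dst x = PInfty" and dnone: "\<forall>z. z \<noteq> x \<longrightarrow> par z = None \<longrightarrow> dst z = MInfty"
    and reach: "\<forall>e\<in>set H. etl e \<notin> Q \<longrightarrow> dst (etl e) \<noteq> MInfty \<longrightarrow> dst (ehd e) \<noteq> MInfty"
    and mono: "\<forall>z. dst z \<le> d' z"
    and scanned: "\<forall>e\<in>set (adj H v). dst v \<noteq> MInfty \<longrightarrow> d' (ehd e) \<noteq> MInfty"
  shows "(\<forall>u<n. u \<notin> Q - {v} \<longrightarrow> (\<forall>w\<in>Q - {v}. d' w \<le> d' u)) \<and> d' x = PInfty \<and>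
    (\<forall>z. z \<noteq> x \<longrightarrow> p' z = None \<longrightarrow> d' z = MInfty) \<and>
    (\<forall>e\<in>set H. etl e \<notin> Q - {v} \<longrightarrow> d' (etl e) \<noteq> MInfty \<longrightarrow> d' (ehd e) \<noteq> MInfty)"
proof -
  from R have dv: "d' v = dst v" and dext: "\<forall>u. u \<notin> Q \<longrightarrow> d' u = dst u"
    and dz: "\<forall>z. (p' z = par z \<and> d' z = dst z) \<or> (\<exists>e. p' z = Some e \<and> d' z \<noteq> MInfty)"
    and dq: "\<forall>w\<in>Q. d' w \<le> dst v" unfolding relax_inv_def by blast+
  have "d' w \<le> d' u" if "u < n" "u \<notin> Q - {v}" "w \<in> Q - {v}" for u w
  proof -
    have "d' w \<le> dst v" using dq that by auto
    also have "dst v \<le> d' u" using that dv dext ext by (cases "u = v") auto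
    finally show ?thesis .
  qed
  moreover have "d' x = PInfty"
    using dz[rule_format, of x] dx mono[rule_format, of x] by auto
  moreover have "d' z = MInfty" if "z \<noteq> x" "p' z = None" for z
    using that dz[rule_format, of z] dnone by auto
  moreover have "d' (ehd e) \<noteq> MInfty"
    if e: "e \<in> set H" "etl e \<notin> Q - {v}" "d' (etl e) \<noteq> MInfty" for e
  proof (cases "etl e = v")
    case True
    then show ?thesis using scanned e dv by (auto simp: set_adj)
  next
    case False
    then have "dst (ehd e) \<noteq> MInfty" using reach e dext by auto
    then show ?thesis using mono[rule_format, of "ehd e"] by auto
  qed
  ultimately show ?thesis by blast
qed

lemma dij_step_inv:
  assumes E: "edges_below n H"
    and I: "dij_inv n H x C0 (dst, par, Q, t)" and Qne: "Q \<noteq> {}"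
  shows "\<exists>d' p' t'. dij_step n H (dst, par, Q, t) = Some (d', p', Q - {pick_max dst Q}, t') \<and>
     dij_inv n H x C0 (d', p', Q - {pick_max dst Q}, t') \<and> pick_max dst Q \<in> Q"
proof -
  from I have Qn: "Q \<subseteq> {..<n}" and ord: "\<forall>u<n. u \<notin> Q \<longrightarrow> (\<forall>w\<in>Q. dst w \<le> dst u)"
    and dx: "dst x = PInfty" and dnone: "\<forall>z. z \<noteq> x \<longrightarrow> par z = None \<longrightarrow> dst z = MInfty"
    and reach: "\<forall>e\<in>set H. etl e \<notin> Q \<longrightarrow> dst (etl e) \<noteq> MInfty \<longrightarrow> dst (ehd e) \<noteq> MInfty"
    and cost: "t + (1 + hc n) * (card Q + (\<Sum>u\<in>Q. length (adj H u))) \<le> C0"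
    unfolding dij_inv_def by auto
  from I obtain rk where rk_settled: "\<forall>u<n. u \<notin> Q \<longrightarrow> rk u < n - card Q"
    and P: "parents_ranked n H Q par rk"
    unfolding dij_inv_def by auto
  have finQ: "finite Q" using Qn finite_subset by blast
  define v where "v = pick_max dst Q"
  have vQ: "v \<in> Q" and vmax: "\<forall>w\<in>Q. dst w \<le> dst v"
    using pick_max_is_max[OF finQ Qne, of dst] by (auto simp: v_def)
  have vn: "v < n" using vQ Qn by auto
  have ext: "\<forall>u<n. u \<notin> Q \<longrightarrow> dst v \<le> dst u" using ord vQ by auto
  have R0: "relax_inv Q H v dst par dst par" unfolding relax_inv_def using vmax by auto
  have L: "\<forall>e\<in>set (adj H v). e \<in> set H \<and> etl e = v" by (auto simp: set_adj)
  obtain d' p' t' where fo: "foldl (relax1 n v) (dst, par, t + 1 + hc n) (adj H v) = (d', p', t')"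
    and R: "relax_inv Q H v dst par d' p'" and t': "t' \<le> t + 1 + hc n + (1 + hc n) * length (adj H v)"
    and mono: "\<forall>z. dst z \<le> d' z" and scanned: "\<forall>e\<in>set (adj H v). dst v \<noteq> MInfty \<longrightarrow> d' (ehd e) \<noteq> MInfty"
    using foldl_relax1_inv[OF E vQ ext R0 L, of "t + 1 + hc n"] by auto
  have cQ: "card Q = Suc (card (Q - {v}))" using vQ finQ by (metis card_Suc_Diff1)
  have "card Q \<le> n" using Qn card_mono[of "{..<n}" Q] by auto
  then have "\<forall>u<n. u \<notin> Q - {v} \<longrightarrow> (rk(v := n - card Q)) u < n - card (Q - {v})"
    using rk_settled cQ by auto
  moreover have "parents_ranked n H (Q - {v}) p' (rk(v := n - card Q))"
    by (rule parents_ranked_settle[OF R vQ vn rk_settled P])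
  moreover have "t' + (1 + hc n) * (card (Q - {v}) + (\<Sum>u\<in>Q - {v}. length (adj H u))) \<le> C0"
  proof -
    have "(\<Sum>u\<in>Q. length (adj H u)) = length (adj H v) + (\<Sum>u\<in>Q - {v}. length (adj H u))"
      using vQ finQ by (metis sum.remove)
    then have "t' + (1 + hc n) * (card (Q - {v}) + (\<Sum>u\<in>Q - {v}. length (adj H u)))
        \<le> t + (1 + hc n) * (card Q + (\<Sum>u\<in>Q. length (adj H u)))"
      using t' cQ by (simp add: algebra_simps)
    then show ?thesis using cost by linarith
  qed
  moreover note dij_labels_settle[OF R vQ ext dx dnone reach mono scanned]
  ultimately have "dij_inv n H x C0 (d', p', Q - {v}, t')"
    using Qn unfolding dij_inv_def prod.case by blast
  moreover have "dij_step n H (dst, par, Q, t) = Some (d', p', Q - {v}, t')"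
    using fo by (simp add: dij_step_def v_def Let_def)
  ultimately show ?thesis using vQ by (auto simp: v_def)
qed

lemma dijkstra_loop:
  assumes E: "edges_below n H"
  defines "C0 \<equiv> 3 * n + length H + 1 + (1 + hc n) * (n + length H)"
  shows "\<exists>dst par t. whileP (\<lambda>(d, p, Q, t). Q \<noteq> {}) (dij_step n H)
      (\<lambda>w. if w = x then PInfty else MInfty, \<lambda>w. None, {0..<n}, 3 * n + length H + 1) = Some (dst, par, {}, t)
      \<and> dij_inv n H x C0 (dst, par, {}, t)"
proof -
  have "(\<Sum>u\<in>{0..<n}. length (adj H u)) = length H"
    using sum_length_adj[of H n] E by (simp add: atLeast0LessThan)
  then have "dij_inv n H x C0 (\<lambda>w. if w = x then PInfty else MInfty, \<lambda>w. None, {0..<n}, 3 * n + length H + 1)"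
    using E unfolding dij_inv_def C0_def parents_ranked_def by (auto intro!: exI[of _ "\<lambda>_. 0"])
  then have "\<exists>s'. whileP (\<lambda>(d, p, Q, t). Q \<noteq> {}) (dij_step n H)
      (\<lambda>w. if w = x then PInfty else MInfty, \<lambda>w. None, {0..<n}, 3 * n + length H + 1) = Some s'
      \<and> dij_inv n H x C0 s' \<and> \<not> (\<lambda>(d, p, Q, t). Q \<noteq> {}) s'"
  proof (rule whileP_rule[where f = "\<lambda>(d, p, Q, t). card Q"])
    fix s assume I: "dij_inv n H x C0 s" and b: "(\<lambda>(d, p, Q, t). Q \<noteq> {}) s"
    obtain dst par Q t where s: "s = (dst, par, Q, t)" by (cases s)
    have fin: "finite Q" using I s by (auto simp: dij_inv_def finite_subset)
    from dij_step_inv[OF E, of x C0 dst par Q t] I b s obtain d' p' t' where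
      "dij_step n H s = Some (d', p', Q - {pick_max dst Q}, t')"
      "dij_inv n H x C0 (d', p', Q - {pick_max dst Q}, t')" "pick_max dst Q \<in> Q"
      by auto
    then show "\<exists>s'. dij_step n H s = Some s' \<and> dij_inv n H x C0 s' \<and>
        (\<lambda>(d, p, Q, t). card Q) s' < (\<lambda>(d, p, Q, t). card Q) s"
      using card_Diff1_less[OF fin] s by auto
  qed
  then obtain s' where "whileP (\<lambda>(d, p, Q, t). Q \<noteq> {}) (dij_step n H)
      (\<lambda>w. if w = x then PInfty else MInfty, \<lambda>w. None, {0..<n}, 3 * n + length H + 1) = Some s'"
    and "dij_inv n H x C0 s'" and "\<not> (\<lambda>(d, p, Q, t). Q \<noteq> {}) s'"
    by blast
  moreover obtain dst par Q t where "s' = (dst, par, Q, t)" by (cases s')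
  ultimately show ?thesis by auto
qed

lemma parent_walk_loop:
  assumes P: "parents_ranked n H {} par rk"
  shows "\<exists>z P t'. whileP (\<lambda>(z, P, t). z \<noteq> x \<and> par z \<noteq> None)
        (\<lambda>(z, P, t). Some (etl (the (par z)), the (par z) # P, t + 1)) (y, [], t) = Some (z, P, t') \<and>
      set P \<subseteq> set H \<and> length P + rk z \<le> rk y \<and> t' = t + length P \<and> (P = [] \<longrightarrow> z = y) \<and>
      (z = x \<or> par z = None)"
proof -
  let ?J = "\<lambda>(z, P, t'). set P \<subseteq> set H \<and> length P + rk z \<le> rk y \<and> t' = t + length P \<and> (P = [] \<longrightarrow> z = y)"
  let ?b = "\<lambda>(z, P, t). z \<noteq> x \<and> par z \<noteq> None"
  let ?c = "\<lambda>(z, P, t). Some (etl (the (par z)), the (par z) # P, t + 1)"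
  have "\<exists>s'. whileP ?b ?c (y, [], t) = Some s' \<and> ?J s' \<and> \<not> ?b s'"
  proof (rule whileP_rule[where f = "\<lambda>(z, P, t). rk z"])
    show "?J (y, [], t)" by simp
  next
    fix s assume J: "?J s" and b: "?b s"
    obtain z Q t' where s: "s = (z, Q, t')" by (cases s)
    with b obtain e where pz: "par z = Some e" by auto
    have eH: "e \<in> set H" and rk: "rk (etl e) < rk z"
      using P pz unfolding parents_ranked_def by blast+
    have "?c s = Some (etl e, e # Q, t' + 1)" using s pz by simp
    moreover have "?J (etl e, e # Q, t' + 1)" using J s eH rk by auto
    moreover have "rk (etl e) < rk z" by (rule rk)
    ultimately show "\<exists>s'. ?c s = Some s' \<and> ?J s' \<and> (\<lambda>(z, P, t). rk z) s' < (\<lambda>(z, P, t). rk z) s"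
      using s by auto
  qed
  then obtain s' where "whileP ?b ?c (y, [], t) = Some s'" "?J s'" "\<not> ?b s'" by blast
  moreover obtain z Q t' where "s' = (z, Q, t')" by (cases s')
  ultimately show ?thesis by auto
qed

lemma maxflow_correct:
  assumes E: "edges_below n H" and yn: "y < n" and xy: "x \<noteq> y"
  shows "\<exists>r P t. maxflow n H x y = Some (r, P, t) \<and> t \<le> (hc n + 5) * (length H + n + 1) \<and>
     set P \<subseteq> set H \<and> length P \<le> n \<and> (r \<longrightarrow> P \<noteq> []) \<and> ((x, y) \<in> (edge_rel H)\<^sup>* \<longrightarrow> r)"
proof -
  define C0 where "C0 = 3 * n + length H + 1 + (1 + hc n) * (n + length H)"
  obtain dst par t where w1: "whileP (\<lambda>(d, p, Q, t). Q \<noteq> {}) (dij_step n H)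
      (\<lambda>w. if w = x then PInfty else MInfty, \<lambda>w. None, {0..<n}, 3 * n + length H + 1) = Some (dst, par, {}, t)"
    and I: "dij_inv n H x C0 (dst, par, {}, t)"
    using dijkstra_loop[OF E, of x] unfolding C0_def by blast
  from I obtain rk where rk_n: "\<forall>u<n. rk u < n" and P: "parents_ranked n H {} par rk"
    and dx: "dst x = PInfty" and dnone: "\<forall>z. z \<noteq> x \<longrightarrow> par z = None \<longrightarrow> dst z = MInfty"
    and reach: "\<forall>e\<in>set H. dst (etl e) \<noteq> MInfty \<longrightarrow> dst (ehd e) \<noteq> MInfty"
    and cost: "t \<le> C0"
    unfolding dij_inv_def by auto
  obtain z Pa t2 where w2: "whileP (\<lambda>(z, P, t). z \<noteq> x \<and> par z \<noteq> None)
        (\<lambda>(z, P, t). Some (etl (the (par z)), the (par z) # P, t + 1)) (y, [], t) = Some (z, Pa, t2)"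
    and PH: "set Pa \<subseteq> set H" and len: "length Pa + rk z \<le> rk y" and t2: "t2 = t + length Pa"
    and nonempty: "Pa = [] \<longrightarrow> z = y" and stop: "z = x \<or> par z = None"
    using parent_walk_loop[OF P, of x y t] by blast
  have mf: "maxflow n H x y = Some (dst y \<noteq> MInfty, Pa, t2 + 1)"
    unfolding maxflow_def using w1 w2 by simp
  have lp: "length Pa \<le> n" using len rk_n yn by (meson add_leD1 le_trans less_imp_le)
  have "t2 + 1 \<le> C0 + n + 1" using cost lp t2 by simp
  also have "\<dots> \<le> (hc n + 5) * (length H + n + 1)" unfolding C0_def by (simp add: algebra_simps)
  finally have "t2 + 1 \<le> (hc n + 5) * (length H + n + 1)" .
  moreover have "dst y \<noteq> MInfty \<longrightarrow> Pa \<noteq> []"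
    using nonempty stop dnone xy by auto
  moreover have "dst y \<noteq> MInfty" if "(x, y) \<in> (edge_rel H)\<^sup>*"
    using that
  proof (induction rule: rtrancl_induct)
    case base then show ?case using dx by simp
  next
    case (step b c)
    then show ?case using reach by (auto simp: edge_rel_def)
  qed
  ultimately show ?thesis using mf PH lp by auto
qed

section \<open>DELETE\_CYCLE\<close>

abbreviation reweighted_subgraph :: "edge list \<Rightarrow> edge list \<Rightarrow> bool" where
  "reweighted_subgraph G2 G \<equiv> \<forall>f\<in>set G2. \<exists>g\<in>set G. eid f = eid g \<and> etl f = etl g \<and> ehd f = ehd g"

definition search_step :: "nat \<Rightarrow> edge \<Rightarrow> edge list \<times> edge list list \<times> bool \<times> nat
    \<Rightarrow> (edge list \<times> edge list list \<times> bool \<times> nat) option" where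
  "search_step n e = (\<lambda>(H, S, fin, t). do {
     (r, P, tm) \<leftarrow> maxflow n H (ehd e) (etl e);
     if r then
       (let mx = Max (evl ` set P) in
        Some (filter (\<lambda>f. evl f < mx) H, S @ [P], False, t + tm + length H + length P + 1))
     else Some (H, S, True, t + tm) })"

text \<open>K is the cost of one round of the search; every round but the last one adds a path to S
and removes at least one edge from H.\<close>
definition search_inv :: "nat \<Rightarrow> edge list \<Rightarrow> nat \<Rightarrow> edge list \<times> edge list list \<times> bool \<times> nat \<Rightarrow> bool" where
  "search_inv n G K = (\<lambda>(H, S, fin, t). set H \<subseteq> set G \<and> (\<forall>P\<in>set S. set P \<subseteq> set G \<and> length P \<le> n) \<and>
     length S + length H \<le> length G \<and> (S = [] \<longrightarrow> H = G \<and> \<not> fin) \<and>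
     t \<le> length G + 1 + (length S + (if fin then 1 else 0)) * K)"

lemma search_step_inv:
  assumes E: "edges_below n G" and e: "ehd e \<noteq> etl e" "etl e < n"
    and reach: "(ehd e, etl e) \<in> (edge_rel G)\<^sup>*"
    and inv: "search_inv n G ((hc n + 6) * (length G + n + 1)) (H, S, False, t)"
  shows "\<exists>s'. search_step n e (H, S, False, t) = Some s' \<and>
     search_inv n G ((hc n + 6) * (length G + n + 1)) s' \<and>
     (\<lambda>(H, S, fin, t). 2 * length H + (if fin then 0 else 1)) s' < 2 * length H + 1"
proof -
  define V where "V = length G + n + 1"
  define K where "K = (hc n + 6) * V"
  have HG: "set H \<subseteq> set G" and lH: "length H \<le> length G"
    and tK: "t \<le> length G + 1 + length S * K"
    using inv by (auto simp: search_inv_def K_def V_def)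
  have "edges_below n H" using E HG by auto
  then obtain r P tm where mf: "maxflow n H (ehd e) (etl e) = Some (r, P, tm)"
    and tm: "tm \<le> (hc n + 5) * (length H + n + 1)" and PH: "set P \<subseteq> set H" and lP: "length P \<le> n"
    and rP: "r \<longrightarrow> P \<noteq> []" and rr: "(ehd e, etl e) \<in> (edge_rel H)\<^sup>* \<longrightarrow> r"
    using maxflow_correct[OF _ e(2,1)] by blast
  have "length H + n + 1 \<le> V" using lH by (simp add: V_def)
  then have tmV: "tm \<le> (hc n + 5) * V" using tm by (meson le_trans mult_le_mono2)
  show ?thesis
  proof (cases r)
    case True
    define mx where "mx = Max (evl ` set P)"
    have "P \<noteq> []" using rP True by simp
    then have "mx \<in> evl ` set P" unfolding mx_def by (intro Max_in) auto
    then obtain f where "f \<in> set P" "evl f = mx" by auto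
    then have shrink: "length (filter (\<lambda>f. evl f < mx) H) < length H"
      using PH by (intro length_filter_less) auto
    have "t + tm + length H + length P + 1 \<le> length G + 1 + length (S @ [P]) * K"
      using tK tmV lH lP by (simp add: K_def V_def algebra_simps)
    then show ?thesis
      using inv mf True shrink PH lP length_filter_le[of "\<lambda>f. evl f < mx" H]
      by (fastforce simp: search_step_def search_inv_def Let_def mx_def K_def V_def)
  next
    case False
    have "S \<noteq> []" using inv rr reach False by (auto simp: search_inv_def)
    moreover have "t + tm \<le> length G + 1 + (length S + 1) * K"
      using tK tmV by (simp add: K_def algebra_simps)
    ultimately show ?thesis
      using inv mf False by (auto simp: search_step_def search_inv_def K_def V_def)
  qed
qed

lemma search_loop:
  assumes E: "edges_below n G" and e: "ehd e \<noteq> etl e" "etl e < n"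
    and reach: "(ehd e, etl e) \<in> (edge_rel G)\<^sup>*"
  shows "\<exists>H S t. whileP (\<lambda>(H, S, fin, t). \<not> fin) (search_step n e) (G, [], False, length G + 1)
      = Some (H, S, True, t) \<and> search_inv n G ((hc n + 6) * (length G + n + 1)) (H, S, True, t)"
proof -
  let ?K = "(hc n + 6) * (length G + n + 1)"
  have "\<exists>s'. whileP (\<lambda>(H, S, fin, t). \<not> fin) (search_step n e) (G, [], False, length G + 1) = Some s'
      \<and> search_inv n G ?K s' \<and> \<not> (\<lambda>(H, S, fin, t). \<not> fin) s'"
  proof (rule whileP_rule[where f = "\<lambda>(H, S, fin, t). 2 * length H + (if fin then 0 else 1)"])
    show "search_inv n G ?K (G, [], False, length G + 1)" by (simp add: search_inv_def)
  next
    fix s assume "search_inv n G ?K s" "(\<lambda>(H, S, fin, t). \<not> fin) s"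
    then show "\<exists>s'. search_step n e s = Some s' \<and> search_inv n G ?K s' \<and>
        (\<lambda>(H, S, fin, t). 2 * length H + (if fin then 0 else 1)) s'
        < (\<lambda>(H, S, fin, t). 2 * length H + (if fin then 0 else 1)) s"
      using search_step_inv[OF E e reach] by (cases s) auto
  qed
  then obtain s' where "whileP (\<lambda>(H, S, fin, t). \<not> fin) (search_step n e) (G, [], False, length G + 1) = Some s'"
    and "search_inv n G ?K s'" and "\<not> (\<lambda>(H, S, fin, t). \<not> fin) s'"
    by blast
  moreover obtain H S fin t where "s' = (H, S, fin, t)" by (cases s')
  ultimately show ?thesis by auto
qed

lemma cancel_cycle:
  assumes "C \<noteq> []" "set C \<subseteq> set G"
    and c: "c = Min (evl ` set C)"
    and G1: "G1 = map (\<lambda>f. if eid f \<in> eid ` set C then (eid f, etl f, ehd f, evl f - c) else f) G"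
    and G2: "G2 = filter (\<lambda>f. evl f \<noteq> 0) G1"
  shows "length G2 < length G" and "reweighted_subgraph G2 G"
    and "distinct (map eid G) \<longrightarrow> distinct (map eid G2)"
proof -
  have "c \<in> evl ` set C" unfolding c using assms(1) by (intro Min_in) auto
  then obtain f where f: "f \<in> set C" "evl f = c" by auto
  have "(eid f, etl f, ehd f, evl f - c) \<in> set G1"
    using f assms(2) unfolding G1 by force
  moreover have "evl (eid f, etl f, ehd f, evl f - c) = 0" using f by (simp add: evl_def)
  ultimately have "length G2 < length G1" unfolding G2 by (intro length_filter_less) auto
  then show "length G2 < length G" by (simp add: G1)
  have "reweighted_subgraph G1 G"
    unfolding G1 by (auto simp: eid_def etl_def ehd_def) force
  then show "reweighted_subgraph G2 G" by (auto simp: G2)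
  have "map eid G1 = map eid G" unfolding G1 by (simp add: eid_def)
  then show "distinct (map eid G) \<longrightarrow> distinct (map eid G2)"
    using distinct_map_filter[of eid G1] by (simp add: G2)
qed

lemma some_argmin_mem:
  fixes f :: "'a \<Rightarrow> 'b::linorder"
  assumes "xs \<noteq> []"
  shows "(SOME x. x \<in> set xs \<and> (\<forall>y\<in>set xs. f x \<le> f y)) \<in> set xs"
proof -
  have "Min (f ` set xs) \<in> f ` set xs" using assms by (intro Min_in) auto
  then obtain x where "x \<in> set xs" "f x = Min (f ` set xs)" by auto
  then have "\<exists>x. x \<in> set xs \<and> (\<forall>y\<in>set xs. f x \<le> f y)" by (intro exI[of _ x]) auto
  then show ?thesis by (rule someI2_ex) blast
qed

lemma sum_list_le_length_mult: "(\<forall>P\<in>set S. f P \<le> (k::nat)) \<Longrightarrow> sum_list (map f S) \<le> length S * k"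
  by (induction S) auto

lemma del_cycle_cost_le:
  assumes "length S \<le> length G" "\<forall>P\<in>set S. length P \<le> n" "length C \<le> n + 1"
    and t: "t \<le> length G + 1 + (length S + 1) * ((hc n + 6) * (length G + n + 1))"
  shows "t + sum_list (map (\<lambda>P. length P + 2) S) + 2 * length C + 3 * length G + 1
    \<le> (hc n + 14) * (length G + 1) * (length G + n + 1)"
proof -
  define K where "K = (hc n + 6) * (length G + n + 1)"
  have "sum_list (map (\<lambda>P. length P + 2) S) \<le> length S * (n + 2)"
    using assms(2) by (intro sum_list_le_length_mult) auto
  also have "\<dots> \<le> length G * (n + 2)" using assms(1) by (rule mult_le_mono1)
  finally have sumS: "sum_list (map (\<lambda>P. length P + 2) S) \<le> length G * (n + 2)" .
  have h1: "t \<le> length G + 1 + (length G + 1) * K"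
    using t mult_le_mono1[of "length S + 1" "length G + 1" K] assms(1) unfolding K_def by linarith
  have h2: "2 * length C \<le> 2 * (n + 1)" using assms(3) by simp
  have "t + sum_list (map (\<lambda>P. length P + 2) S) + 2 * length C + 3 * length G + 1
      \<le> length G + 1 + (length G + 1) * K + length G * (n + 2) + 2 * (n + 1) + 3 * length G + 1"
    using add_mono[OF add_mono[OF h1 sumS] h2] by simp
  also have "\<dots> \<le> (hc n + 14) * (length G + 1) * (length G + n + 1)"
    unfolding K_def by (simp add: algebra_simps)
  finally show ?thesis .
qed

text \<open>Which path of S closes the cycle is irrelevant for the cost bound.\<close>
lemma del_cycle_correct:
  assumes E: "edges_below n G" and loopless: "ehd e \<noteq> etl e"
    and eG: "e \<in> set G" and reach: "(ehd e, etl e) \<in> (edge_rel G)\<^sup>*"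
  shows "\<exists>G2 t. del_cycle n G e = Some (G2, t) \<and> t \<le> (hc n + 14) * (length G + 1) * (length G + n + 1) \<and>
     length G2 < length G \<and> reweighted_subgraph G2 G \<and> (distinct (map eid G) \<longrightarrow> distinct (map eid G2))"
proof -
  obtain H S t where w: "whileP (\<lambda>(H, S, fin, t). \<not> fin) (search_step n e) (G, [], False, length G + 1)
      = Some (H, S, True, t)" and inv: "search_inv n G ((hc n + 6) * (length G + n + 1)) (H, S, True, t)"
    using search_loop[OF E loopless _ reach] E eG by blast
  have Sne: "S \<noteq> []" and lS: "length S \<le> length G" and SG: "\<forall>P\<in>set S. set P \<subseteq> set G \<and> length P \<le> n"
    and tK: "t \<le> length G + 1 + (length S + 1) * ((hc n + 6) * (length G + n + 1))"
    using inv by (auto simp: search_inv_def)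
  define flow_value where "flow_value = (\<lambda>P. Max (evl ` set (e # P)) - Min (evl ` set (e # P)))"
  define C where "C = e # (SOME P. P \<in> set S \<and> (\<forall>Q\<in>set S. flow_value P \<le> flow_value Q))"
  define c where "c = Min (evl ` set C)"
  define G1 where "G1 = map (\<lambda>f. if eid f \<in> eid ` set C then (eid f, etl f, ehd f, evl f - c) else f) G"
  define G2 where "G2 = filter (\<lambda>f. evl f \<noteq> 0) G1"
  have "del_cycle n G e =
      Some (G2, t + sum_list (map (\<lambda>P. length P + 2) S) + 2 * length C + 3 * length G + 1)"
    unfolding del_cycle_def w[unfolded search_step_def]
    by (simp only: Option.bind_lunit prod.case if_not_P[OF Sne] Let_def
        G2_def G1_def c_def C_def flow_value_def)
  moreover have CG: "set C \<subseteq> set G" and lC: "length C \<le> n + 1"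
    using some_argmin_mem[OF Sne, of flow_value] SG eG by (auto simp: C_def)
  moreover note del_cycle_cost_le[OF lS _ lC tK]
  moreover note cancel_cycle[OF _ CG c_def G1_def G2_def]
  ultimately show ?thesis using SG by (auto simp: C_def)
qed

section \<open>Weighted Cycle Deletion\<close>

definition loopless_in :: "nat \<Rightarrow> edge list \<Rightarrow> bool" where
  "loopless_in n G = (\<forall>f\<in>set G. etl f < n \<and> ehd f < n \<and> etl f \<noteq> ehd f)"

lemma cycle_through_inserted_edge:
  assumes "acyclic R" "\<not> acyclic (insert (a, b) R)"
  shows "(b, a) \<in> R\<^sup>*"
proof -
  from assms(2) obtain v where "(v, v) \<in> (insert (a, b) R)\<^sup>+" by (auto simp: acyclic_def)
  then have "(v, v) \<in> R\<^sup>+ \<or> ((v, a) \<in> R\<^sup>* \<and> (b, v) \<in> R\<^sup>*)" by (simp add: trancl_insert)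
  then show ?thesis using assms(1) by (auto simp: acyclic_def)
qed

lemma edge_rel_remove_eid:
  assumes "distinct (map eid G)" "e \<in> set G" "eid e = i"
  shows "edge_rel G = insert (etl e, ehd e) (edge_rel (filter (\<lambda>f. eid f \<noteq> i) G))"
proof -
  have "f = e" if "f \<in> set G" "eid f = i" for f
    using assms that by (metis distinct_map inj_onD)
  then show ?thesis using assms(2) by (auto simp: edge_rel_def)
qed

lemma edge_rel_remove_eid_mono:
  assumes "reweighted_subgraph G2 G"
  shows "edge_rel (filter (\<lambda>f. eid f \<noteq> i) G2) \<subseteq> edge_rel (filter (\<lambda>f. eid f \<noteq> i) G)"
proof
  fix p assume "p \<in> edge_rel (filter (\<lambda>f. eid f \<noteq> i) G2)"
  then obtain f where f: "f \<in> set G2" "eid f \<noteq> i" "p = (etl f, ehd f)" by (auto simp: edge_rel_def)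
  then obtain g where "g \<in> set G" "eid f = eid g" "etl f = etl g" "ehd f = ehd g" using assms by blast
  then show "p \<in> edge_rel (filter (\<lambda>f. eid f \<noteq> i) G)" using f unfolding edge_rel_def by auto
qed

lemma find_Some_mem: "find P xs = Some x \<Longrightarrow> x \<in> set xs \<and> P x"
  by (induction xs) (auto split: if_splits)

lemma inserted_edge_on_cycle:
  assumes dH: "distinct (map eid H)" and rest_acyclic: "acyclic (edge_rel (filter (\<lambda>f. eid f \<noteq> i) H))"
    and cyclic: "\<not> acyclic (edge_rel H)"
  shows "\<exists>e. find (\<lambda>f. eid f = i) H = Some e \<and> e \<in> set H \<and> eid e = i \<and> (ehd e, etl e) \<in> (edge_rel H)\<^sup>*"
proof -
  have "\<exists>f\<in>set H. eid f = i"
  proof (rule ccontr)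
    assume "\<not> (\<exists>f\<in>set H. eid f = i)"
    then have "filter (\<lambda>f. eid f \<noteq> i) H = H" by (intro filter_True) auto
    then show False using rest_acyclic cyclic by simp
  qed
  then have "find (\<lambda>f. eid f = i) H \<noteq> None" unfolding find_None_iff by blast
  then obtain e where find: "find (\<lambda>f. eid f = i) H = Some e" by auto
  then have eH: "e \<in> set H" "eid e = i" using find_Some_mem[OF find] by auto
  have "\<not> acyclic (insert (etl e, ehd e) (edge_rel (filter (\<lambda>f. eid f \<noteq> i) H)))"
    using cyclic unfolding edge_rel_remove_eid[OF dH eH] .
  then have "(ehd e, etl e) \<in> (edge_rel (filter (\<lambda>f. eid f \<noteq> i) H))\<^sup>*"
    by (rule cycle_through_inserted_edge[OF rest_acyclic])
  moreover have "edge_rel (filter (\<lambda>f. eid f \<noteq> i) H) \<subseteq> edge_rel H" by (auto simp: edge_rel_def)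
  ultimately have "(ehd e, etl e) \<in> (edge_rel H)\<^sup>*" by (meson rtrancl_mono subsetD)
  then show ?thesis using find eH by blast
qed

definition check_cost :: "nat \<Rightarrow> nat \<Rightarrow> nat" where
  "check_cost n M = 5 * (M + n + 1)"

definition round_cost :: "nat \<Rightarrow> nat \<Rightarrow> nat" where
  "round_cost n M = M + (hc n + 14) * (M + 1) * (M + n + 1) + check_cost n M"

definition cancel_step :: "nat \<Rightarrow> nat \<Rightarrow> edge list \<times> nat \<times> bool \<Rightarrow> (edge list \<times> nat \<times> bool) option" where
  "cancel_step n i = (\<lambda>(G, t, cyc). do {
     e \<leftarrow> find (\<lambda>f. eid f = i) G;
     (G1, t1) \<leftarrow> del_cycle n G e;
     (cyc', t2) \<leftarrow> has_cycle n G1;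
     Some (G1, t + length G + t1 + t2, cyc') })"

text \<open>The term E * length G is a potential: each round costs at most E and removes an edge.\<close>
definition cancel_inv :: "nat \<Rightarrow> nat \<Rightarrow> nat \<Rightarrow> nat \<Rightarrow> edge list \<times> nat \<times> bool \<Rightarrow> bool" where
  "cancel_inv n i E T = (\<lambda>(G, t, cyc). loopless_in n G \<and> distinct (map eid G) \<and> (\<forall>f\<in>set G. eid f \<le> i) \<and>
     acyclic (edge_rel (filter (\<lambda>f. eid f \<noteq> i) G)) \<and> (cyc \<longleftrightarrow> \<not> acyclic (edge_rel G)) \<and>
     length G \<le> Suc i \<and> t + E * length G \<le> T)"

lemma loopless_in_reweighted: "loopless_in n H \<Longrightarrow> reweighted_subgraph G1 H \<Longrightarrow> loopless_in n G1"
  unfolding loopless_in_def by metis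

lemma cancel_round_cost:
  assumes "length H \<le> M" "length G1 < length H"
    and t1: "t1 \<le> (hc n + 14) * (length H + 1) * (length H + n + 1)"
    and t2: "t2 \<le> 2 * length G1 + 5 * n + 1"
  shows "length H + t1 + t2 + round_cost n M * length G1 \<le> round_cost n M * length H"
proof -
  have "(hc n + 14) * (length H + 1) * (length H + n + 1) \<le> (hc n + 14) * (M + 1) * (M + n + 1)"
    using assms(1) by (intro mult_le_mono mult_le_mono2) auto
  moreover have "t2 \<le> check_cost n M" using t2 assms(1,2) by (simp add: check_cost_def)
  ultimately have "length H + t1 + t2 \<le> round_cost n M"
    using t1 assms(1) unfolding round_cost_def by linarith
  moreover have "round_cost n M * Suc (length G1) \<le> round_cost n M * length H"
    using assms(2) by (intro mult_le_mono2) simp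
  ultimately show ?thesis by simp
qed

lemma cancel_step_inv:
  assumes L: "cancel_inv n i (round_cost n M) T (H, tH, True)" and iM: "Suc i \<le> M"
  shows "\<exists>s'. cancel_step n i (H, tH, True) = Some s' \<and> cancel_inv n i (round_cost n M) T s' \<and>
    (\<lambda>(G, t, cyc). length G) s' < length H"
proof -
  have EH: "loopless_in n H" and dH: "distinct (map eid H)" and iH: "\<forall>f\<in>set H. eid f \<le> i"
    and aH: "acyclic (edge_rel (filter (\<lambda>f. eid f \<noteq> i) H))" and nac: "\<not> acyclic (edge_rel H)"
    and lH: "length H \<le> Suc i" and pot: "tH + round_cost n M * length H \<le> T"
    using L by (simp_all add: cancel_inv_def)
  obtain e where fe: "find (\<lambda>f. eid f = i) H = Some e" and eH: "e \<in> set H"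
    and reach: "(ehd e, etl e) \<in> (edge_rel H)\<^sup>*"
    using inserted_edge_on_cycle[OF dH aH nac] by blast
  have "edges_below n H" "ehd e \<noteq> etl e" using EH eH by (auto simp: loopless_in_def)
  then obtain G1 t1 where dc: "del_cycle n H e = Some (G1, t1)"
    and t1: "t1 \<le> (hc n + 14) * (length H + 1) * (length H + n + 1)"
    and lG1: "length G1 < length H" and sub: "reweighted_subgraph G1 H"
    and dG1: "distinct (map eid H) \<longrightarrow> distinct (map eid G1)"
    using del_cycle_correct[OF _ _ eH reach] by blast
  have EG1: "loopless_in n G1" using loopless_in_reweighted[OF EH sub] .
  then have "edges_below n G1" by (simp add: loopless_in_def)
  then obtain cyc' t2 where hc1: "has_cycle n G1 = Some (cyc', t2)" and t2: "t2 \<le> 2 * length G1 + 5 * n + 1"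
    and cyc': "cyc' \<longleftrightarrow> \<not> acyclic (edge_rel G1)" using has_cycle_correct by blast
  have "length H \<le> M" using lH iM by simp
  then have "tH + length H + t1 + t2 + round_cost n M * length G1 \<le> T"
    using cancel_round_cost[OF _ lG1 t1 t2, of M] pot by linarith
  moreover have "\<forall>f\<in>set G1. eid f \<le> i" using sub iH by fastforce
  moreover have "acyclic (edge_rel (filter (\<lambda>f. eid f \<noteq> i) G1))"
    using acyclic_subset[OF aH edge_rel_remove_eid_mono[OF sub]] .
  ultimately have "cancel_inv n i (round_cost n M) T (G1, tH + length H + t1 + t2, cyc')"
    using EG1 dG1 dH cyc' lG1 lH by (simp add: cancel_inv_def)
  moreover have "cancel_step n i (H, tH, True) = Some (G1, tH + length H + t1 + t2, cyc')"
    using fe dc hc1 by (simp add: cancel_step_def)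
  ultimately show ?thesis using lG1 by auto
qed

lemma wcd_step_correct:
  assumes EG: "loopless_in n G" and dG: "distinct (map eid G)" and iG: "\<forall>f\<in>set G. eid f < i"
    and aG: "acyclic (edge_rel G)" and lG: "length G \<le> i" and iM: "Suc i \<le> M"
    and ab: "a < n" "b < n" "a \<noteq> b"
  shows "\<exists>G'' t''. wcd_step n (Some (G, t)) (i, (a, b, x)) = Some (G'', t'') \<and> loopless_in n G'' \<and>
     distinct (map eid G'') \<and> (\<forall>f\<in>set G''. eid f < Suc i) \<and> acyclic (edge_rel G'') \<and> length G'' \<le> Suc i \<and>
     t'' + round_cost n M * length G'' \<le> t + round_cost n M * length G + 1 + check_cost n M + round_cost n M"
proof -
  define G' where "G' = G @ [(i, a, b, x)]"
  define T where "T = t + round_cost n M * length G + 1 + check_cost n M + round_cost n M"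
  have EG': "loopless_in n G'" using EG ab by (simp add: loopless_in_def G'_def etl_def ehd_def)
  then have "edges_below n G'" by (simp add: loopless_in_def)
  then obtain c0 t0 where hc0: "has_cycle n G' = Some (c0, t0)" and t0: "t0 \<le> 2 * length G' + 5 * n + 1"
    and c0: "c0 \<longleftrightarrow> \<not> acyclic (edge_rel G')" using has_cycle_correct by blast
  have lG': "length G' = Suc (length G)" by (simp add: G'_def)
  then have t0A: "t0 \<le> check_cost n M" using t0 lG iM by (simp add: check_cost_def)
  have "filter (\<lambda>f. eid f \<noteq> i) G = G" using iG by (intro filter_True) auto
  then have filt: "filter (\<lambda>f. eid f \<noteq> i) G' = G" by (simp add: G'_def eid_def)
  have "cancel_inv n i (round_cost n M) T (G', t + 1 + t0, c0)"
    using EG' filt aG c0 lG' lG dG iG t0A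
    by (auto simp: cancel_inv_def T_def G'_def eid_def)
  then have "\<exists>s'. whileP (\<lambda>(G, t, cyc). cyc) (cancel_step n i) (G', t + 1 + t0, c0) = Some s' \<and>
      cancel_inv n i (round_cost n M) T s' \<and> \<not> (\<lambda>(G, t, cyc). cyc) s'"
  proof (rule whileP_rule[where f = "\<lambda>(G, t, cyc). length G"])
    fix s assume "cancel_inv n i (round_cost n M) T s" "(\<lambda>(G, t, cyc). cyc) s"
    then show "\<exists>s'. cancel_step n i s = Some s' \<and> cancel_inv n i (round_cost n M) T s' \<and>
        (\<lambda>(G, t, cyc). length G) s' < (\<lambda>(G, t, cyc). length G) s"
      using cancel_step_inv[OF _ iM] by (cases s) auto
  qed
  then obtain G'' t'' cyc where w: "whileP (\<lambda>(G, t, cyc). cyc) (cancel_step n i) (G', t + 1 + t0, c0)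
      = Some (G'', t'', cyc)" and L: "cancel_inv n i (round_cost n M) T (G'', t'', cyc)" and "\<not> cyc"
    by auto
  have "wcd_step n (Some (G, t)) (i, (a, b, x)) = Some (G'', t'')"
    unfolding wcd_step_def
    by (simp only: prod.case Option.bind_lunit Let_def G'_def[symmetric] hc0
        w[unfolded cancel_step_def])
  then show ?thesis using L \<open>\<not> cyc\<close> unfolding T_def by (auto simp: cancel_inv_def less_Suc_eq_le)
qed

lemma wcd_foldl_correct:
  assumes "loopless_in n G" "distinct (map eid G)" "\<forall>f\<in>set G. eid f < k" "acyclic (edge_rel G)"
    and "length G \<le> k" "t + round_cost n M * length G \<le> 1 + k * (1 + check_cost n M + round_cost n M)"
    and "map fst ys = [k..<k + length ys]" "k + length ys \<le> M"
    and "\<forall>(i, a, b, x)\<in>set ys. a < n \<and> b < n \<and> a \<noteq> b"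
  shows "\<exists>G' t'. foldl (wcd_step n) (Some (G, t)) ys = Some (G', t') \<and>
    t' \<le> 1 + (k + length ys) * (1 + check_cost n M + round_cost n M)"
  using assms
proof (induction ys arbitrary: k G t)
  case Nil
  then show ?case by simp
next
  case (Cons y ys)
  obtain i a b x where y: "y = (i, (a, b, x))" by (cases y) auto
  have ik: "i = k" using Cons.prems(7) y by (simp add: upt_conv_Cons del: upt_Suc)
  have ab: "a < n" "b < n" "a \<noteq> b" using Cons.prems(9) y by auto
  have "\<forall>f\<in>set G. eid f < i" "length G \<le> i" "Suc i \<le> M" using Cons.prems(3,5,8) ik by auto
  then obtain G'' t'' where step: "wcd_step n (Some (G, t)) (i, (a, b, x)) = Some (G'', t'')"
    and inv: "loopless_in n G''" "distinct (map eid G'')" "\<forall>f\<in>set G''. eid f < Suc i"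
      "acyclic (edge_rel G'')" "length G'' \<le> Suc i"
    and pot: "t'' + round_cost n M * length G'' \<le> t + round_cost n M * length G + 1 + check_cost n M + round_cost n M"
    using wcd_step_correct[OF Cons.prems(1,2) _ Cons.prems(4) _ _ ab, of i M t x] by blast
  have "t'' + round_cost n M * length G'' \<le> 1 + Suc k * (1 + check_cost n M + round_cost n M)"
    using pot Cons.prems(6) by simp
  moreover have "map fst ys = [Suc k..<Suc k + length ys]"
    using Cons.prems(7) by (simp add: upt_conv_Cons del: upt_Suc)
  ultimately obtain G' t' where "foldl (wcd_step n) (Some (G'', t'')) ys = Some (G', t')"
    and "t' \<le> 1 + (Suc k + length ys) * (1 + check_cost n M + round_cost n M)"
    using Cons.IH[of G'' "Suc k" t''] inv Cons.prems(8,9) ik by auto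
  then show ?case using step y ik by simp
qed

lemma wcd_cost:
  assumes "valid_input n es"
  shows "\<exists>G t. wcd n es = Some (G, t) \<and>
    t \<le> 1 + length es * (1 + check_cost n (length es) + round_cost n (length es))"
proof -
  let ?ys = "zip [0..<length es] es"
  let ?C = "1 + check_cost n (length es) + round_cost n (length es)"
  have "\<forall>(i, a, b, x)\<in>set ?ys. a < n \<and> b < n \<and> a \<noteq> b"
    using assms unfolding valid_input_def by (auto dest: set_zip_rightD)
  then have "\<exists>G' t'. foldl (wcd_step n) (Some ([], 1)) ?ys = Some (G', t') \<and> t' \<le> 1 + (0 + length ?ys) * ?C"
    by (intro wcd_foldl_correct) (auto simp: loopless_in_def edge_rel_def acyclic_def)
  then show ?thesis by (simp add: wcd_def)
qed

lemma round_cost_le: "1 + check_cost n M + round_cost n M \<le> (hc n + 25) * (M + 1) * (M + n + 1)"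
proof -
  have "1 + M + 10 * (M + n + 1) \<le> 11 * ((M + 1) * (M + n + 1))" by simp
  then show ?thesis unfolding round_cost_def check_cost_def by (simp add: algebra_simps)
qed

lemma hc_le_log:
  assumes "n \<ge> 2"
  shows "real (hc n) \<le> 4 * log 2 (real n)"
proof -
  have L1: "1 \<le> log 2 (real n)" using assms by (simp add: le_log_iff)
  have "0 \<le> log 2 (real n + 1)" using assms by simp
  then have "real (hc n) = real_of_int \<lceil>log 2 (real n + 1)\<rceil> + 1"
    unfolding hc_def by simp
  also have "\<dots> \<le> log 2 (real n + 1) + 2" using of_int_ceiling_le_add_one[of "log 2 (real n + 1)"] by linarith
  also have "log 2 (real n + 1) \<le> log 2 (2 * real n)" using assms by simp
  also have "log 2 (2 * real n) = 1 + log 2 (real n)" using assms by (simp add: log_mult)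
  finally show ?thesis using L1 by simp
qed

lemma valid_input_two_vertices: "valid_input n es \<Longrightarrow> es \<noteq> [] \<Longrightarrow> 2 \<le> n"
  unfolding valid_input_def by (cases es) auto

lemma cubic_log_bound:
  fixes M n :: nat
  assumes "1 \<le> M" "2 \<le> n"
  shows "real (1 + M * ((hc n + 25) * (M + 1) * (M + n + 1)))
    \<le> 200 * (real (M + n) * real M ^ 2 * log 2 (real n)) + 200"
proof -
  define L where "L = log 2 (real n)"
  have hL: "real (hc n) \<le> 4 * L" and L1: "1 \<le> L"
    using hc_le_log[OF assms(2)] assms(2) by (auto simp: L_def le_log_iff)
  have "real M * (real (hc n) + 25) \<le> real M * (29 * L)"
    using hL L1 by (intro mult_left_mono) auto
  then have "real M * (real (hc n) + 25) * (real M + 1) \<le> real M * (29 * L) * (2 * real M)"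
    by (rule mult_mono) (use assms L1 in auto)
  then have "real M * (real (hc n) + 25) * (real M + 1) * (real M + real n + 1) \<le>
      real M * (29 * L) * (2 * real M) * (2 * (real M + real n))"
    by (rule mult_mono) (use assms L1 in auto)
  also have "\<dots> = 116 * (real (M + n) * real M ^ 2 * L)" by (simp add: power2_eq_square algebra_simps)
  finally have "real M * (real (hc n) + 25) * (real M + 1) * (real M + real n + 1)
      \<le> 116 * (real (M + n) * real M ^ 2 * L)" .
  moreover have "0 \<le> real (M + n) * real M ^ 2 * L" using L1 by simp
  moreover have "real (1 + M * ((hc n + 25) * (M + 1) * (M + n + 1)))
      = 1 + real M * (real (hc n) + 25) * (real M + 1) * (real M + real n + 1)"
    by (simp add: algebra_simps)
  ultimately show ?thesis unfolding L_def by linarith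
qed

theorem theorem3p6:
  "\<exists>c::real. c > 0 \<and> (\<forall>n es. valid_input n es \<longrightarrow>
     (\<exists>G t. wcd n es = Some (G, t) \<and>
        real t \<le> c * (real (length es + n) * real (length es) ^ 2 * log 2 (real n)) + c))"
proof (intro exI[of _ 200] conjI allI impI)
  fix n es assume v: "valid_input n es"
  let ?M = "length es"
  obtain G t where wc: "wcd n es = Some (G, t)"
    and "t \<le> 1 + ?M * (1 + check_cost n ?M + round_cost n ?M)"
    using wcd_cost[OF v] by blast
  moreover have "?M * (1 + check_cost n ?M + round_cost n ?M) \<le> ?M * ((hc n + 25) * (?M + 1) * (?M + n + 1))"
    by (rule mult_le_mono2[OF round_cost_le])
  ultimately have t: "t \<le> 1 + ?M * ((hc n + 25) * (?M + 1) * (?M + n + 1))" by linarith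
  have "real t \<le> 200 * (real (?M + n) * real ?M ^ 2 * log 2 (real n)) + 200"
  proof (cases "es = []")
    case True
    then show ?thesis using t by simp
  next
    case False
    then have "1 \<le> ?M" "2 \<le> n" using valid_input_two_vertices[OF v] by (auto simp: Suc_le_eq)
    then show ?thesis using cubic_log_bound of_nat_mono[OF t] by (meson order_trans)
  qed
  with wc show "\<exists>G t. wcd n es = Some (G, t) \<and>
      real t \<le> 200 * (real (?M + n) * real ?M ^ 2 * log 2 (real n)) + 200" by blast
qed simp

end
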